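(* Consider the censored delayed-feedback bandit model with threshold $m\ge 1$ (described in the context), with conversion rates $\theta=(\theta_1,\dots,\theta_K)\in(0,1)^K$ such that arm $1$ is the unique optimal arm ($\theta^*:=\theta_1>\theta_k$ for all $k\neq 1$), and with a delay distribution whose CDF satisfies $\tau_m>0$. Then every uniformly efficient algorithm satisfies \[ \liminf_{T\to\infty}\frac{L(T)}{\log T}\;\ge\;\sum_{k\neq 1}\frac{\tau_m(\theta^*-\theta_k)}{d(\tau_m\theta_k,\tau_m\theta^* )} . \]
   Context: Delayed-feedback bandit model: there are $K$ arms with unknown conversion rates $\theta_1,\dots,\theta_K\in[0,1]$, and a known delay distribution on $\mathbb{N}=\{0,1,2,\dots\}$ with CDF $\tau_d=\mathbb{P}(D\le d)$, $d\ge 0$. At each round $t=1,2,\dots$ the learner chooses an arm $A_t\in\{1,\dots,K\}$ as a function of the observations available before round $t$. This triggers $C_t\in\{0,1\}$ and $D_t\in\mathbb{N}$ which, conditionally on the past, are independent, with $C_t\sim\mathrm{Bernoulli}(\theta_{A_t})$ and $D_t$ distributed with CDF $\tau$. For $s\le t$ let $X_{s,t}=C_s\mathbf{1}\{D_s\le t-s\}$. In the censored model with threshold $m$, at round $t$ the learner observes $X_{s,t}$ only for $t-m\le s\le t$, and receives reward $Y_t=\sum_{s=t-m}^{t}C_s\mathbf{1}\{D_s=t-s\}$. The expected regret is $L(T)=\mathbb{E}[r^*(T)-r(T)]$ where $r(T)=\sum_{t=1}^T Y_t$ and $r^*(T)$ is the cumulated reward of an oracle playing the optimal arm at every round. An algorithm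 is uniformly efficient if for every bandit model (every parameter vector $\theta$) and every $\alpha\in(0,1)$, $L(T)/T^\alpha\to 0$ as $T\to\infty$. $d(p,q)=p\log(p/q)+(1-p)\log((1-p)/(1-q))$ denotes the Bernoulli Kullback–Leibler divergence. *)

theory Defs
  imports "HOL-Probability.Probability"
begin

text \<open>Censored delayed-feedback Bernoulli bandit. Arms are 1..K, rounds are 1,2,...
  A hidden trajectory of length n is the list of triples (A_s, C_s, D_s), s = 1..n
  (stored at list index s-1).\<close>

type_synonym trajectory = "(nat \<times> bool \<times> nat) list"

text \<open>Learner's view: for each past round t, its own action A_t and the observations
  X_{s,t} for max 1 (t-m) <= s <= t (in increasing order of s).\<close>
type_synonym history = "(nat \<times> bool list) list"

type_synonym policy = "history \<Rightarrow> nat pmf"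

definition tau :: "nat pmf \<Rightarrow> nat \<Rightarrow> real" where
  "tau \<delta> d = measure_pmf.prob \<delta> {..d}"

definition conv :: "trajectory \<Rightarrow> nat \<Rightarrow> bool" where
  "conv tr s = fst (snd (tr ! (s - 1)))"

definition delay :: "trajectory \<Rightarrow> nat \<Rightarrow> nat" where
  "delay tr s = snd (snd (tr ! (s - 1)))"

definition arm :: "trajectory \<Rightarrow> nat \<Rightarrow> nat" where
  "arm tr s = fst (tr ! (s - 1))"

definition Xobs :: "trajectory \<Rightarrow> nat \<Rightarrow> nat \<Rightarrow> bool" where
  "Xobs tr s t = (conv tr s \<and> delay tr s \<le> t - s)"

definition obs_round :: "nat \<Rightarrow> trajectory \<Rightarrow> nat \<Rightarrow> bool list" where
  "obs_round m tr t = map (\<lambda>s. Xobs tr s t) [max 1 (t - m) ..< Suc t]"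

definition view :: "nat \<Rightarrow> trajectory \<Rightarrow> history" where
  "view m tr = map (\<lambda>t. (arm tr t, obs_round m tr t)) [1 ..< Suc (length tr)]"

fun traj :: "nat \<Rightarrow> policy \<Rightarrow> (nat \<Rightarrow> real) \<Rightarrow> nat pmf \<Rightarrow> nat \<Rightarrow> trajectory pmf" where
  "traj m \<pi> \<theta> \<delta> 0 = return_pmf []"
| "traj m \<pi> \<theta> \<delta> (Suc n) =
     bind_pmf (traj m \<pi> \<theta> \<delta> n) (\<lambda>tr.
     bind_pmf (\<pi> (view m tr)) (\<lambda>a.
     bind_pmf (bernoulli_pmf (\<theta> a)) (\<lambda>c.
     bind_pmf \<delta> (\<lambda>d. return_pmf (tr @ [(a, c, d)])))))"

definition reward_round :: "nat \<Rightarrow> trajectory \<Rightarrow> nat \<Rightarrow> nat" where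
  "reward_round m tr t = card {s \<in> {max 1 (t - m) .. t}. conv tr s \<and> delay tr s = t - s}"

definition cum_reward :: "nat \<Rightarrow> trajectory \<Rightarrow> nat \<Rightarrow> nat" where
  "cum_reward m tr T = (\<Sum>t\<in>{1..T}. reward_round m tr t)"

definition expected_reward :: "nat \<Rightarrow> policy \<Rightarrow> (nat \<Rightarrow> real) \<Rightarrow> nat pmf \<Rightarrow> nat \<Rightarrow> real" where
  "expected_reward m \<pi> \<theta> \<delta> T =
     measure_pmf.expectation (traj m \<pi> \<theta> \<delta> T) (\<lambda>tr. real (cum_reward m tr T))"

definition opt_arm :: "nat \<Rightarrow> (nat \<Rightarrow> real) \<Rightarrow> nat" where
  "opt_arm K \<theta> = (SOME k. k \<in> {1..K} \<and> (\<forall>j\<in>{1..K}. \<theta> j \<le> \<theta> k))"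

definition regret :: "nat \<Rightarrow> nat \<Rightarrow> policy \<Rightarrow> (nat \<Rightarrow> real) \<Rightarrow> nat pmf \<Rightarrow> nat \<Rightarrow> real" where
  "regret K m \<pi> \<theta> \<delta> T =
     expected_reward m (\<lambda>_. return_pmf (opt_arm K \<theta>)) \<theta> \<delta> T - expected_reward m \<pi> \<theta> \<delta> T"

definition valid_policy :: "nat \<Rightarrow> policy \<Rightarrow> bool" where
  "valid_policy K \<pi> = (\<forall>h. set_pmf (\<pi> h) \<subseteq> {1..K})"

definition uniformly_efficient :: "nat \<Rightarrow> nat \<Rightarrow> nat pmf \<Rightarrow> policy \<Rightarrow> bool" where
  "uniformly_efficient K m \<delta> \<pi> =
     (\<forall>\<theta>::nat \<Rightarrow> real. (\<forall>k\<in>{1..K}. 0 \<le> \<theta> k \<and> \<theta> k \<le> 1) \<longrightarrow>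
        (\<forall>\<alpha>::real. 0 < \<alpha> \<and> \<alpha> < 1 \<longrightarrow>
           (\<lambda>T. regret K m \<pi> \<theta> \<delta> T / real T powr \<alpha>) \<longlonglongrightarrow> 0))"

definition kl_bern :: "real \<Rightarrow> real \<Rightarrow> real" where
  "kl_bern p q = p * ln (p / q) + (1 - p) * ln ((1 - p) / (1 - q))"

end

theory Submission
  imports Defs
begin

(* A change-of-measure argument in the style of Lai and Robbins. The learner's observations and
   the reward depend on a round only through its arm and the censored code of its delay, so the
   law of the compressed history is an explicit finite product. Raising the rate of a suboptimal
   arm k to some x slightly above theta_1 only changes the code law of arm k, hence the relative
   entropy between the two laws after n rounds is E[N_k(n)] d(tau_m theta_k, tau_m x). Data
   processing applied to N_k(n)/(n+1) bounds it below by about ln(1 / (1 - E'[N_k(n)]/(n+1))), and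
   uniform efficiency makes n - E'[N_k(n)] = O(n^alpha) for every alpha > 0 under the alternative
   and E[N_k(n)] = o(n) under the original model; so E[N_k(n)] is at least about
   ln n / d(tau_m theta_k, tau_m theta_1). Each pull of k before round n costs
   tau_m (theta_1 - theta_k) in expected regret at horizon n + m. *)

section \<open>Compressed histories and their law\<close>

lemma integral_bind_pmf_bounded:
  fixes f :: "'b \<Rightarrow> real"
  assumes "\<And>x. \<bar>f x\<bar> \<le> B"
  shows "measure_pmf.expectation (bind_pmf M N) f =
    measure_pmf.expectation M (\<lambda>x. measure_pmf.expectation (N x) f)"
  using measurable_measure_pmf[of N] unfolding measure_pmf_bind
  by (intro integral_bind[where K="count_space UNIV" and B=B and B'=1]) (use assms in auto)

lemma abs_sum_weighted_le:
  fixes w f :: "'a \<Rightarrow> real"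
  assumes "finite A" and "\<And>x. x \<in> A \<Longrightarrow> 0 \<le> w x" and "sum w A = 1"
    and "\<And>x. x \<in> A \<Longrightarrow> \<bar>f x\<bar> \<le> B"
  shows "\<bar>\<Sum>x\<in>A. w x * f x\<bar> \<le> B"
proof -
  have "\<bar>\<Sum>x\<in>A. w x * f x\<bar> \<le> (\<Sum>x\<in>A. w x * B)"
    using assms by (intro order_trans[OF sum_abs] sum_mono) (auto simp: abs_mult intro: mult_left_mono)
  also have "\<dots> = B"
    using assms(3) by (simp add: sum_distrib_right[symmetric])
  finally show ?thesis .
qed

text \<open>All the learner ever observes about a round with conversion \<open>c\<close> and delay \<open>d\<close> is this
  code: the delay if the conversion arrives within the window of \<open>m\<close> rounds, and \<open>m + 1\<close> otherwise.\<close>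

definition censor_code :: "nat \<Rightarrow> bool \<Rightarrow> nat \<Rightarrow> nat" where
  "censor_code m c d = (if c then min d (Suc m) else Suc m)"

definition compress :: "nat \<Rightarrow> trajectory \<Rightarrow> (nat \<times> nat) list" where
  "compress m tr = map (\<lambda>(a, c, d). (a, censor_code m c d)) tr"

definition compressed_view :: "nat \<Rightarrow> (nat \<times> nat) list \<Rightarrow> history" where
  "compressed_view m h =
     map (\<lambda>t. (fst (h ! (t - 1)), map (\<lambda>s. snd (h ! (s - 1)) \<le> t - s) [max 1 (t - m)..<Suc t]))
       [1..<Suc (length h)]"

definition code_prob :: "nat \<Rightarrow> nat pmf \<Rightarrow> real \<Rightarrow> nat \<Rightarrow> real" where
  "code_prob m \<delta> x z = (if z \<le> m then x * pmf \<delta> z else if z = Suc m then 1 - x * tau \<delta> m else 0)"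

definition hists :: "nat \<Rightarrow> nat \<Rightarrow> nat \<Rightarrow> (nat \<times> nat) list set" where
  "hists K m n = {h. length h = n \<and> set h \<subseteq> {1..K} \<times> {0..Suc m}}"

definition hist_prob :: "nat \<Rightarrow> policy \<Rightarrow> (nat \<Rightarrow> real) \<Rightarrow> nat pmf \<Rightarrow> (nat \<times> nat) list \<Rightarrow> real" where
  "hist_prob m \<pi> \<theta> \<delta> h =
     (\<Prod>s<length h. pmf (\<pi> (compressed_view m (take s h))) (fst (h ! s))
                    * code_prob m \<delta> (\<theta> (fst (h ! s))) (snd (h ! s)))"

definition hist_expect ::
    "nat \<Rightarrow> nat \<Rightarrow> policy \<Rightarrow> (nat \<Rightarrow> real) \<Rightarrow> nat pmf \<Rightarrow> nat \<Rightarrow> ((nat \<times> nat) list \<Rightarrow> real) \<Rightarrow> real" where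
  "hist_expect K m \<pi> \<theta> \<delta> n \<Phi> = (\<Sum>h\<in>hists K m n. hist_prob m \<pi> \<theta> \<delta> h * \<Phi> h)"

lemma length_compress [simp]: "length (compress m tr) = length tr"
  by (simp add: compress_def)

lemma compress_snoc: "compress m (tr @ [(a, c, d)]) = compress m tr @ [(a, censor_code m c d)]"
  by (simp add: compress_def)

lemma view_eq_compressed_view: "view m tr = compressed_view m (compress m tr)"
  unfolding view_def compressed_view_def length_compress
proof (intro map_cong refl)
  fix t assume t: "t \<in> set [1..<Suc (length tr)]"
  have obs: "Xobs tr s t = (snd (compress m tr ! (s - 1)) \<le> t - s)"
    if s: "s \<in> set [max 1 (t - m)..<Suc t]" for s
  proof -
    obtain a c d where e: "tr ! (s - 1) = (a, c, d)" by (metis prod_cases3)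
    have "s - 1 < length tr" and "t - s \<le> m" using s t by auto
    then show ?thesis using e by (auto simp: Xobs_def conv_def delay_def compress_def censor_code_def)
  qed
  have "t - 1 < length tr" using t by auto
  then have "arm tr t = fst (compress m tr ! (t - 1))"
    by (simp add: arm_def compress_def split_def)
  then show "(arm tr t, obs_round m tr t) =
      (fst (compress m tr ! (t - 1)),
       map (\<lambda>s. snd (compress m tr ! (s - 1)) \<le> t - s) [max 1 (t - m)..<Suc t])"
    unfolding obs_round_def using obs by simp
qed

lemma finite_hists: "finite (hists K m n)"
proof -
  have "hists K m n \<subseteq> {xs. set xs \<subseteq> {1..K} \<times> {0..Suc m} \<and> length xs = n}"
    unfolding hists_def by auto
  then show ?thesis by (rule finite_subset) (intro finite_lists_length_eq, auto)
qed

lemma hists_0: "hists K m 0 = {[]}"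
  by (auto simp: hists_def)

lemma hists_Suc:
  "hists K m (Suc n) = (\<lambda>(h, x). h @ [x]) ` (hists K m n \<times> ({1..K} \<times> {0..Suc m}))"
proof
  show "hists K m (Suc n) \<subseteq> (\<lambda>(h, x). h @ [x]) ` (hists K m n \<times> ({1..K} \<times> {0..Suc m}))"
  proof
    fix h' assume h': "h' \<in> hists K m (Suc n)"
    then obtain h x where "h' = h @ [x]"
      unfolding hists_def by (metis (mono_tags) length_Suc_conv_rev mem_Collect_eq rev.simps(2) rev_rev_ident)
    with h' show "h' \<in> (\<lambda>(h, x). h @ [x]) ` (hists K m n \<times> ({1..K} \<times> {0..Suc m}))"
      unfolding hists_def by (auto intro!: image_eqI[of _ _ "(h, x)"])
  qed
qed (auto simp: hists_def)

lemma sum_hists_Suc: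
  "(\<Sum>h'\<in>hists K m (Suc n). F h') = (\<Sum>h\<in>hists K m n. \<Sum>a\<in>{1..K}. \<Sum>z\<in>{0..Suc m}. F (h @ [(a, z)]))"
proof -
  have "inj_on (\<lambda>(h, x). h @ [x]) (hists K m n \<times> ({1..K} \<times> {0..Suc m}))"
    by (auto simp: inj_on_def)
  then have "(\<Sum>h'\<in>hists K m (Suc n). F h') = (\<Sum>(h, x)\<in>hists K m n \<times> ({1..K} \<times> {0..Suc m}). F (h @ [x]))"
    unfolding hists_Suc by (subst sum.reindex) (simp_all add: split_def)
  also have "\<dots> = (\<Sum>h\<in>hists K m n. \<Sum>x\<in>{1..K} \<times> {0..Suc m}. F (h @ [x]))"
    by (subst sum.cartesian_product) (simp add: split_def)
  also have "\<dots> = (\<Sum>h\<in>hists K m n. \<Sum>a\<in>{1..K}. \<Sum>z\<in>{0..Suc m}. F (h @ [(a, z)]))"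
    by (intro sum.cong refl) (simp only: sum.cartesian_product split_def prod.collapse)
  finally show ?thesis .
qed

lemma hist_prob_Nil [simp]: "hist_prob m \<pi> \<theta> \<delta> [] = 1"
  by (simp add: hist_prob_def)

lemma hist_prob_snoc:
  "hist_prob m \<pi> \<theta> \<delta> (h @ [(a, z)]) =
     hist_prob m \<pi> \<theta> \<delta> h * (pmf (\<pi> (compressed_view m h)) a * code_prob m \<delta> (\<theta> a) z)"
proof -
  have "(\<Prod>s<length h. pmf (\<pi> (compressed_view m (take s (h @ [(a, z)])))) (fst ((h @ [(a, z)]) ! s))
            * code_prob m \<delta> (\<theta> (fst ((h @ [(a, z)]) ! s))) (snd ((h @ [(a, z)]) ! s)))
        = hist_prob m \<pi> \<theta> \<delta> h"
    unfolding hist_prob_def by (intro prod.cong refl) (simp add: nth_append)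
  then show ?thesis
    by (simp add: hist_prob_def prod.lessThan_Suc)
qed

lemma tau_eq_sum_pmf: "tau \<delta> c = (\<Sum>z\<in>{0..c}. pmf \<delta> z)"
  unfolding tau_def by (subst measure_measure_pmf_finite) (auto simp: atLeast0AtMost)

lemma code_prob_nonneg: "0 \<le> x \<Longrightarrow> x \<le> 1 \<Longrightarrow> 0 \<le> code_prob m \<delta> x z"
  using measure_pmf.prob_le_1[of \<delta> "{..m}"] by (auto simp: code_prob_def tau_def mult_le_one)

lemma sum_code_prob_le:
  assumes "c \<le> m"
  shows "(\<Sum>z\<in>{0..Suc m}. code_prob m \<delta> x z * (if z \<le> c then 1 else 0)) = x * tau \<delta> c"
proof -
  have "(\<Sum>z\<in>{0..Suc m}. code_prob m \<delta> x z * (if z \<le> c then 1 else 0))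
      = (\<Sum>z\<in>{0..Suc m}. if z \<in> {0..c} then code_prob m \<delta> x z else 0)"
    by (intro sum.cong refl) auto
  also have "\<dots> = (\<Sum>z\<in>{0..c}. code_prob m \<delta> x z)"
    using assms by (subst sum.If_cases) (auto intro!: sum.cong)
  also have "\<dots> = x * tau \<delta> c"
    using assms by (simp add: code_prob_def tau_eq_sum_pmf sum_distrib_left)
  finally show ?thesis .
qed

lemma sum_code_prob: "(\<Sum>z\<in>{0..Suc m}. code_prob m \<delta> x z) = 1"
  using sum_code_prob_le[of m m \<delta> x] by (simp add: sum.atLeast0_atMost_Suc code_prob_def)

lemma expectation_censored_delay:
  fixes \<phi> :: "nat \<Rightarrow> real"
  shows "measure_pmf.expectation \<delta> (\<lambda>d. \<phi> (min d (Suc m))) =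
     (\<Sum>z\<in>{0..m}. pmf \<delta> z * \<phi> z) + (1 - tau \<delta> m) * \<phi> (Suc m)"
proof -
  let ?D = "map_pmf (\<lambda>d. min d (Suc m)) \<delta>"
  have low: "pmf ?D z = pmf \<delta> z" if "z \<le> m" for z
  proof -
    have "(\<lambda>d. min d (Suc m)) -` {z} = {z}" using that by auto
    then show ?thesis by (simp add: pmf_map measure_pmf_single)
  qed
  have top: "pmf ?D (Suc m) = 1 - tau \<delta> m"
  proof -
    have "(\<lambda>d. min d (Suc m)) -` {Suc m} = UNIV - {..m}" by auto
    then show ?thesis using measure_pmf.prob_compl[of "{..m}" \<delta>] by (simp add: pmf_map tau_def)
  qed
  have "measure_pmf.expectation \<delta> (\<lambda>d. \<phi> (min d (Suc m))) = measure_pmf.expectation ?D \<phi>"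
    by simp
  also have "\<dots> = (\<Sum>z\<in>{0..Suc m}. \<phi> z * pmf ?D z)"
    by (rule integral_measure_pmf_real) auto
  also have "\<dots> = (\<Sum>z\<in>{0..m}. \<phi> z * pmf ?D z) + (1 - tau \<delta> m) * \<phi> (Suc m)"
    by (simp add: sum.atLeast0_atMost_Suc top)
  also have "(\<Sum>z\<in>{0..m}. \<phi> z * pmf ?D z) = (\<Sum>z\<in>{0..m}. pmf \<delta> z * \<phi> z)"
    by (intro sum.cong refl) (simp add: low)
  finally show ?thesis .
qed

lemma expectation_censor_code:
  fixes \<phi> :: "nat \<Rightarrow> real"
  assumes "0 \<le> x" "x \<le> 1"
  shows "measure_pmf.expectation (bernoulli_pmf x)
           (\<lambda>c. measure_pmf.expectation \<delta> (\<lambda>d. \<phi> (censor_code m c d)))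
       = (\<Sum>z\<in>{0..Suc m}. code_prob m \<delta> x z * \<phi> z)"
proof -
  have "(\<Sum>z\<in>{0..m}. code_prob m \<delta> x z * \<phi> z) = x * (\<Sum>z\<in>{0..m}. pmf \<delta> z * \<phi> z)"
    by (simp add: code_prob_def sum_distrib_left mult.assoc)
  then have "(\<Sum>z\<in>{0..Suc m}. code_prob m \<delta> x z * \<phi> z)
      = x * (\<Sum>z\<in>{0..m}. pmf \<delta> z * \<phi> z) + (1 - x * tau \<delta> m) * \<phi> (Suc m)"
    by (simp add: sum.atLeast0_atMost_Suc code_prob_def)
  with assms show ?thesis
    by (simp add: censor_code_def expectation_censored_delay algebra_simps)
qed

lemma sum_pmf_policy: "valid_policy K \<pi> \<Longrightarrow> (\<Sum>a\<in>{1..K}. pmf (\<pi> v) a) = 1"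
  unfolding valid_policy_def by (intro sum_pmf_eq_1) auto

lemma pmf_policy_outside: "valid_policy K \<pi> \<Longrightarrow> a \<notin> {1..K} \<Longrightarrow> pmf (\<pi> v) a = 0"
  unfolding valid_policy_def by (meson pmf_eq_0_set_pmf subsetD)

lemma expectation_policy:
  fixes \<psi> :: "nat \<Rightarrow> real"
  assumes "valid_policy K \<pi>"
  shows "measure_pmf.expectation (\<pi> v) \<psi> = (\<Sum>a\<in>{1..K}. pmf (\<pi> v) a * \<psi> a)"
proof -
  have "\<forall>a\<in>set_pmf (\<pi> v). a \<in> {1..K}" using assms unfolding valid_policy_def by blast
  then show ?thesis by (subst integral_measure_pmf_real[of "{1..K}"]) (auto simp: mult.commute)
qed


lemma hist_prob_nonneg:
  assumes "\<forall>k\<in>{1..K}. 0 \<le> \<theta> k \<and> \<theta> k \<le> 1" and "h \<in> hists K m n"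
  shows "0 \<le> hist_prob m \<pi> \<theta> \<delta> h"
  unfolding hist_prob_def
proof (intro prod_nonneg mult_nonneg_nonneg)
  fix s assume "s \<in> {..<length h}"
  then have "fst (h ! s) \<in> {1..K}" using assms(2) nth_mem unfolding hists_def by fastforce
  then show "0 \<le> code_prob m \<delta> (\<theta> (fst (h ! s))) (snd (h ! s))"
    using assms(1) code_prob_nonneg by auto
qed simp

lemma hist_expect_Suc:
  "hist_expect K m \<pi> \<theta> \<delta> (Suc n) \<Phi> =
     hist_expect K m \<pi> \<theta> \<delta> n (\<lambda>h. \<Sum>a\<in>{1..K}. pmf (\<pi> (compressed_view m h)) a
                             * (\<Sum>z\<in>{0..Suc m}. code_prob m \<delta> (\<theta> a) z * \<Phi> (h @ [(a, z)])))"
  unfolding hist_expect_def sum_hists_Suc hist_prob_snoc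
  by (simp only: sum_distrib_left mult.assoc)

lemma hist_expect_cong:
  "(\<And>h. h \<in> hists K m n \<Longrightarrow> \<Phi> h = \<Psi> h) \<Longrightarrow> hist_expect K m \<pi> \<theta> \<delta> n \<Phi> = hist_expect K m \<pi> \<theta> \<delta> n \<Psi>"
  unfolding hist_expect_def by (intro sum.cong refl) auto

lemma hist_expect_add:
  "hist_expect K m \<pi> \<theta> \<delta> n (\<lambda>h. \<Phi> h + \<Psi> h) = hist_expect K m \<pi> \<theta> \<delta> n \<Phi> + hist_expect K m \<pi> \<theta> \<delta> n \<Psi>"
  unfolding hist_expect_def distrib_left by (rule sum.distrib)

lemma hist_expect_cmult:
  "hist_expect K m \<pi> \<theta> \<delta> n (\<lambda>h. c * \<Phi> h) = c * hist_expect K m \<pi> \<theta> \<delta> n \<Phi>"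
  unfolding hist_expect_def sum_distrib_left by (intro sum.cong refl) (simp only: mult.left_commute)

lemma hist_expect_sum:
  "hist_expect K m \<pi> \<theta> \<delta> n (\<lambda>h. \<Sum>i\<in>I. \<Phi> i h) = (\<Sum>i\<in>I. hist_expect K m \<pi> \<theta> \<delta> n (\<Phi> i))"
  unfolding hist_expect_def sum_distrib_left by (rule sum.swap)

lemma hist_expect_mono:
  assumes "\<forall>k\<in>{1..K}. 0 \<le> \<theta> k \<and> \<theta> k \<le> 1" and "\<And>h. h \<in> hists K m n \<Longrightarrow> \<Phi> h \<le> \<Psi> h"
  shows "hist_expect K m \<pi> \<theta> \<delta> n \<Phi> \<le> hist_expect K m \<pi> \<theta> \<delta> n \<Psi>"
  unfolding hist_expect_def using assms hist_prob_nonneg[OF assms(1)]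
  by (intro sum_mono mult_left_mono) auto

lemma hist_expect_const:
  assumes "valid_policy K \<pi>"
  shows "hist_expect K m \<pi> \<theta> \<delta> n (\<lambda>_. c) = c"
proof (induction n)
  case 0 then show ?case by (simp add: hist_expect_def hists_0)
next
  case (Suc n)
  have "hist_expect K m \<pi> \<theta> \<delta> (Suc n) (\<lambda>_. c) = hist_expect K m \<pi> \<theta> \<delta> n (\<lambda>_. c)"
    unfolding hist_expect_Suc
    by (simp only: sum_distrib_right[symmetric] sum_code_prob mult_1_left sum_pmf_policy[OF assms])
  with Suc show ?case by simp
qed

text \<open>Tower property: the term of round \<open>s\<close> is averaged over the action and code of that round.\<close>

lemma hist_expect_additive:
  assumes vp: "valid_policy K \<pi>"
  shows "hist_expect K m \<pi> \<theta> \<delta> n (\<lambda>h. \<Sum>s<n. f s (h ! s)) =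
     (\<Sum>s<n. hist_expect K m \<pi> \<theta> \<delta> s (\<lambda>h. \<Sum>a\<in>{1..K}. pmf (\<pi> (compressed_view m h)) a
                                    * (\<Sum>z\<in>{0..Suc m}. code_prob m \<delta> (\<theta> a) z * f s (a, z))))"
proof (induction n)
  case 0 then show ?case by (simp add: hist_expect_def hists_0)
next
  case (Suc n)
  let ?p = "\<lambda>h. pmf (\<pi> (compressed_view m h))"
  let ?I = "\<lambda>s h. \<Sum>a\<in>{1..K}. ?p h a * (\<Sum>z\<in>{0..Suc m}. code_prob m \<delta> (\<theta> a) z * f s (a, z))"
  have "(\<Sum>a\<in>{1..K}. ?p h a * (\<Sum>z\<in>{0..Suc m}. code_prob m \<delta> (\<theta> a) z * (\<Sum>s<Suc n. f s ((h @ [(a, z)]) ! s))))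
      = (\<Sum>s<n. f s (h ! s)) + ?I n h" if h: "h \<in> hists K m n" for h
  proof -
    have "length h = n" using h by (simp add: hists_def)
    then have "(\<Sum>a\<in>{1..K}. ?p h a * (\<Sum>z\<in>{0..Suc m}. code_prob m \<delta> (\<theta> a) z * (\<Sum>s<Suc n. f s ((h @ [(a, z)]) ! s))))
      = (\<Sum>a\<in>{1..K}. ?p h a * (\<Sum>z\<in>{0..Suc m}. code_prob m \<delta> (\<theta> a) z * ((\<Sum>s<n. f s (h ! s)) + f n (a, z))))"
      by (simp add: nth_append del: sum.atLeast0_atMost_Suc)
    also have "\<dots> = (\<Sum>a\<in>{1..K}. ?p h a * ((\<Sum>z\<in>{0..Suc m}. code_prob m \<delta> (\<theta> a) z) * (\<Sum>s<n. f s (h ! s))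
                               + (\<Sum>z\<in>{0..Suc m}. code_prob m \<delta> (\<theta> a) z * f n (a, z))))"
      by (simp only: distrib_left sum.distrib sum_distrib_right)
    also have "\<dots> = (\<Sum>a\<in>{1..K}. ?p h a) * (\<Sum>s<n. f s (h ! s)) + ?I n h"
      by (simp only: sum_code_prob mult_1_left distrib_left sum.distrib sum_distrib_right)
    finally show ?thesis
      by (simp only: sum_pmf_policy[OF vp] mult_1_left)
  qed
  then have "hist_expect K m \<pi> \<theta> \<delta> (Suc n) (\<lambda>h. \<Sum>s<Suc n. f s (h ! s)) =
        hist_expect K m \<pi> \<theta> \<delta> n (\<lambda>h. (\<Sum>s<n. f s (h ! s)) + ?I n h)"
    unfolding hist_expect_Suc by (rule hist_expect_cong)
  also have "\<dots> = (\<Sum>s<Suc n. hist_expect K m \<pi> \<theta> \<delta> s (?I s))"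
    by (simp add: hist_expect_add Suc.IH)
  finally show ?case .
qed

lemma abs_step_expectation_le:
  assumes vp: "valid_policy K \<pi>" and th: "\<forall>k\<in>{1..K}. 0 \<le> \<theta> k \<and> \<theta> k \<le> 1"
    and F: "\<And>h. \<bar>F h\<bar> \<le> B"
  shows "\<bar>\<Sum>a\<in>{1..K}. pmf (\<pi> (compressed_view m h)) a
                      * (\<Sum>z\<in>{0..Suc m}. code_prob m \<delta> (\<theta> a) z * F (h @ [(a, z)]))\<bar> \<le> B"
proof (rule abs_sum_weighted_le)
  fix a assume "a \<in> {1..K}"
  then show "\<bar>\<Sum>z\<in>{0..Suc m}. code_prob m \<delta> (\<theta> a) z * F (h @ [(a, z)])\<bar> \<le> B"
    using th F by (intro abs_sum_weighted_le sum_code_prob) (auto simp: code_prob_nonneg)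
qed (use sum_pmf_policy[OF vp] in auto)

lemma expectation_round:
  assumes vp: "valid_policy K \<pi>" and th: "\<forall>k\<in>{1..K}. 0 \<le> \<theta> k \<and> \<theta> k \<le> 1"
    and F: "\<And>h. \<bar>F h\<bar> \<le> B"
  shows "measure_pmf.expectation
           (\<pi> (view m tr) \<bind> (\<lambda>a. bernoulli_pmf (\<theta> a) \<bind> (\<lambda>c. \<delta> \<bind> (\<lambda>d. return_pmf (tr @ [(a, c, d)])))))
           (\<lambda>tr'. F (compress m tr'))
       = (\<Sum>a\<in>{1..K}. pmf (\<pi> (compressed_view m (compress m tr))) a
                      * (\<Sum>z\<in>{0..Suc m}. code_prob m \<delta> (\<theta> a) z * F (compress m tr @ [(a, z)])))"
proof -
  have "measure_pmf.expectation
           (\<pi> (view m tr) \<bind> (\<lambda>a. bernoulli_pmf (\<theta> a) \<bind> (\<lambda>c. \<delta> \<bind> (\<lambda>d. return_pmf (tr @ [(a, c, d)])))))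
           (\<lambda>tr'. F (compress m tr'))
      = measure_pmf.expectation (\<pi> (view m tr)) (\<lambda>a. measure_pmf.expectation (bernoulli_pmf (\<theta> a))
          (\<lambda>c. measure_pmf.expectation \<delta> (\<lambda>d. F (compress m tr @ [(a, censor_code m c d)]))))"
    by (simp add: integral_bind_pmf_bounded[where B=B, OF F] compress_snoc)
  also have "\<dots> = (\<Sum>a\<in>{1..K}. pmf (\<pi> (view m tr)) a * measure_pmf.expectation (bernoulli_pmf (\<theta> a))
          (\<lambda>c. measure_pmf.expectation \<delta> (\<lambda>d. F (compress m tr @ [(a, censor_code m c d)]))))"
    by (rule expectation_policy[OF vp])
  also have "\<dots> = (\<Sum>a\<in>{1..K}. pmf (\<pi> (compressed_view m (compress m tr))) a
                      * (\<Sum>z\<in>{0..Suc m}. code_prob m \<delta> (\<theta> a) z * F (compress m tr @ [(a, z)])))"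
    unfolding view_eq_compressed_view
  proof (intro sum.cong refl)
    fix a assume "a \<in> {1..K}"
    then show "pmf (\<pi> (compressed_view m (compress m tr))) a * measure_pmf.expectation (bernoulli_pmf (\<theta> a))
          (\<lambda>c. measure_pmf.expectation \<delta> (\<lambda>d. F (compress m tr @ [(a, censor_code m c d)])))
        = pmf (\<pi> (compressed_view m (compress m tr))) a
            * (\<Sum>z\<in>{0..Suc m}. code_prob m \<delta> (\<theta> a) z * F (compress m tr @ [(a, z)]))"
      using th expectation_censor_code[of "\<theta> a" \<delta> "\<lambda>z. F (compress m tr @ [(a, z)])" m] by simp
  qed
  finally show ?thesis .
qed

lemma expectation_traj_compress:
  assumes vp: "valid_policy K \<pi>" and th: "\<forall>k\<in>{1..K}. 0 \<le> \<theta> k \<and> \<theta> k \<le> 1"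
  shows "(\<And>h. \<bar>F h\<bar> \<le> B) \<Longrightarrow>
    measure_pmf.expectation (traj m \<pi> \<theta> \<delta> n) (\<lambda>tr. F (compress m tr)) = hist_expect K m \<pi> \<theta> \<delta> n F"
proof (induction n arbitrary: F B)
  case 0
  then show ?case by (simp add: hist_expect_def hists_0 compress_def)
next
  case (Suc n)
  let ?G = "\<lambda>h. \<Sum>a\<in>{1..K}. pmf (\<pi> (compressed_view m h)) a
                             * (\<Sum>z\<in>{0..Suc m}. code_prob m \<delta> (\<theta> a) z * F (h @ [(a, z)]))"
  have "measure_pmf.expectation (traj m \<pi> \<theta> \<delta> (Suc n)) (\<lambda>tr. F (compress m tr))
      = measure_pmf.expectation (traj m \<pi> \<theta> \<delta> n) (\<lambda>tr. measure_pmf.expectation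
          (\<pi> (view m tr) \<bind> (\<lambda>a. bernoulli_pmf (\<theta> a) \<bind> (\<lambda>c. \<delta> \<bind> (\<lambda>d. return_pmf (tr @ [(a, c, d)])))))
          (\<lambda>tr'. F (compress m tr')))"
    unfolding traj.simps by (rule integral_bind_pmf_bounded) (rule Suc.prems)
  also have "\<dots> = measure_pmf.expectation (traj m \<pi> \<theta> \<delta> n) (\<lambda>tr. ?G (compress m tr))"
    by (rule arg_cong[where f="measure_pmf.expectation _"], rule ext, rule expectation_round[OF vp th Suc.prems])
  also have "\<dots> = hist_expect K m \<pi> \<theta> \<delta> n ?G"
    by (rule Suc.IH[OF abs_step_expectation_le[OF vp th Suc.prems]])
  finally show ?case
    by (simp only: hist_expect_Suc)
qed

section \<open>Expected reward and regret\<close>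

lemma length_traj: "tr \<in> set_pmf (traj m \<pi> \<theta> \<delta> n) \<Longrightarrow> length tr = n"
proof (induction n arbitrary: tr)
  case 0 then show ?case by simp
next
  case (Suc n)
  then show ?case by (auto simp: set_bind_pmf)
qed

definition hist_reward :: "nat \<Rightarrow> nat \<Rightarrow> (nat \<times> nat) list \<Rightarrow> real" where
  "hist_reward m T h = (\<Sum>s<T. if snd (h ! s) \<le> min m (T - Suc s) then 1 else 0)"

text \<open>Each conversion is counted in \<open>r(T)\<close> exactly once, at round \<open>s + D_s\<close>, provided
  \<open>D_s \<le> m\<close> and \<open>s + D_s \<le> T\<close>.\<close>

lemma cum_reward_eq_sum:
  "real (cum_reward m tr T) =
     (\<Sum>s<T. if conv tr (Suc s) \<and> delay tr (Suc s) \<le> min m (T - Suc s) then 1 else 0)"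
proof -
  let ?Q = "\<lambda>s t. s \<in> {max 1 (t - m)..t} \<and> conv tr s \<and> delay tr s = t - s"
  have "real (cum_reward m tr T) = (\<Sum>t\<in>{1..T}. \<Sum>s\<in>{1..T}. if ?Q s t then 1 else 0)"
    unfolding cum_reward_def of_nat_sum
  proof (intro sum.cong refl)
    fix t assume "t \<in> {1..T}"
    then have e: "{s \<in> {max 1 (t - m)..t}. conv tr s \<and> delay tr s = t - s} = {s \<in> {1..T}. ?Q s t}"
      by auto
    show "real (reward_round m tr t) = (\<Sum>s\<in>{1..T}. if ?Q s t then 1 else 0)"
      unfolding reward_round_def e by (subst sum.inter_filter[symmetric]) simp_all
  qed
  also have "\<dots> = (\<Sum>s\<in>{1..T}. \<Sum>t\<in>{1..T}. if ?Q s t then 1 else 0)"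
    by (rule sum.swap)
  also have "\<dots> = (\<Sum>s\<in>{1..T}. if conv tr s \<and> delay tr s \<le> min m (T - s) then 1 else 0)"
  proof (intro sum.cong refl)
    fix s assume s: "s \<in> {1..T}"
    have "(\<Sum>t\<in>{1..T}. if ?Q s t then 1 else (0::real))
        = (\<Sum>t\<in>{1..T}. if t = s + delay tr s then (if conv tr s \<and> delay tr s \<le> m then 1 else 0) else 0)"
      using s by (intro sum.cong refl) auto
    also have "\<dots> = (if conv tr s \<and> delay tr s \<le> min m (T - s) then 1 else 0)"
      using s by (subst sum.delta) auto
    finally show "(\<Sum>t\<in>{1..T}. if ?Q s t then 1 else (0::real)) =
        (if conv tr s \<and> delay tr s \<le> min m (T - s) then 1 else 0)" .
  qed
  also have "\<dots> = (\<Sum>s<T. if conv tr (Suc s) \<and> delay tr (Suc s) \<le> min m (T - Suc s) then 1 else 0)"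
    by (simp only: One_nat_def sum.atLeast1_atMost_eq)
  finally show ?thesis .
qed

lemma cum_reward_eq_hist_reward:
  assumes "length tr = T"
  shows "real (cum_reward m tr T) = hist_reward m T (compress m tr)"
  unfolding cum_reward_eq_sum hist_reward_def
proof (intro sum.cong refl)
  fix s assume "s \<in> {..<T}"
  moreover obtain a c d where "tr ! s = (a, c, d)" by (metis prod_cases3)
  ultimately show "(if conv tr (Suc s) \<and> delay tr (Suc s) \<le> min m (T - Suc s) then 1 else (0::real)) =
      (if snd (compress m tr ! s) \<le> min m (T - Suc s) then 1 else 0)"
    using assms by (cases c) (simp_all add: conv_def delay_def compress_def censor_code_def)
qed

lemma abs_hist_reward_le: "\<bar>hist_reward m T h\<bar> \<le> T"
proof -
  have "\<bar>hist_reward m T h\<bar> \<le> (\<Sum>s<T. \<bar>if snd (h ! s) \<le> min m (T - Suc s) then 1 else (0::real)\<bar>)"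
    unfolding hist_reward_def by (rule sum_abs)
  also have "\<dots> \<le> (\<Sum>s<T. 1)" by (intro sum_mono) simp
  finally show ?thesis by simp
qed

definition pull_prob :: "nat \<Rightarrow> nat \<Rightarrow> policy \<Rightarrow> (nat \<Rightarrow> real) \<Rightarrow> nat pmf \<Rightarrow> nat \<Rightarrow> nat \<Rightarrow> real" where
  "pull_prob K m \<pi> \<theta> \<delta> k s = hist_expect K m \<pi> \<theta> \<delta> s (\<lambda>h. pmf (\<pi> (compressed_view m h)) k)"

lemma pull_prob_nonneg:
  assumes "\<forall>k\<in>{1..K}. 0 \<le> \<theta> k \<and> \<theta> k \<le> 1" and "valid_policy K \<pi>"
  shows "0 \<le> pull_prob K m \<pi> \<theta> \<delta> k s"
  using hist_expect_mono[OF assms(1), of m s "\<lambda>_. 0" "\<lambda>h. pmf (\<pi> (compressed_view m h)) k" \<pi> \<delta>]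
    hist_expect_const[OF assms(2), of m \<theta> \<delta> s 0]
  unfolding pull_prob_def by simp

lemma pull_prob_le_1:
  assumes "\<forall>k\<in>{1..K}. 0 \<le> \<theta> k \<and> \<theta> k \<le> 1" and "valid_policy K \<pi>"
  shows "pull_prob K m \<pi> \<theta> \<delta> k s \<le> 1"
  using hist_expect_mono[OF assms(1), of m s "\<lambda>h. pmf (\<pi> (compressed_view m h)) k" "\<lambda>_. 1" \<pi> \<delta>]
    hist_expect_const[OF assms(2), of m \<theta> \<delta> s 1]
  unfolding pull_prob_def by (simp add: pmf_le_1)

lemma sum_pull_prob_bounds:
  assumes "\<forall>k\<in>{1..K}. 0 \<le> \<theta> k \<and> \<theta> k \<le> 1" and "valid_policy K \<pi>"
  shows "0 \<le> (\<Sum>s<n. pull_prob K m \<pi> \<theta> \<delta> k s)" and "(\<Sum>s<n. pull_prob K m \<pi> \<theta> \<delta> k s) \<le> n"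
proof -
  show "0 \<le> (\<Sum>s<n. pull_prob K m \<pi> \<theta> \<delta> k s)"
    using pull_prob_nonneg[OF assms] by (intro sum_nonneg)
  have "(\<Sum>s<n. pull_prob K m \<pi> \<theta> \<delta> k s) \<le> (\<Sum>s<n. 1)"
    using pull_prob_le_1[OF assms] by (intro sum_mono)
  then show "(\<Sum>s<n. pull_prob K m \<pi> \<theta> \<delta> k s) \<le> n" by simp
qed

lemma sum_pull_prob:
  assumes "valid_policy K \<pi>"
  shows "(\<Sum>a\<in>{1..K}. pull_prob K m \<pi> \<theta> \<delta> a s) = 1"
  unfolding pull_prob_def hist_expect_sum[symmetric] sum_pmf_policy[OF assms]
  by (rule hist_expect_const[OF assms])

lemma pull_prob_return:
  assumes "ob \<in> {1..K}"
  shows "pull_prob K m (\<lambda>_. return_pmf ob) \<theta> \<delta> a s = of_bool (a = ob)"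
proof -
  have "valid_policy K (\<lambda>_. return_pmf ob)"
    using assms by (simp add: valid_policy_def)
  then show ?thesis
    unfolding pull_prob_def pmf_return using hist_expect_const by (simp add: indicator_def)
qed

lemma expected_reward_eq_hist_expect:
  assumes "valid_policy K \<pi>" and "\<forall>k\<in>{1..K}. 0 \<le> \<theta> k \<and> \<theta> k \<le> 1"
  shows "expected_reward m \<pi> \<theta> \<delta> T = hist_expect K m \<pi> \<theta> \<delta> T (hist_reward m T)"
proof -
  have "expected_reward m \<pi> \<theta> \<delta> T
      = measure_pmf.expectation (traj m \<pi> \<theta> \<delta> T) (\<lambda>tr. hist_reward m T (compress m tr))"
    unfolding expected_reward_def
    by (rule integral_cong_AE) (simp_all add: AE_measure_pmf_iff cum_reward_eq_hist_reward length_traj)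
  also have "\<dots> = hist_expect K m \<pi> \<theta> \<delta> T (hist_reward m T)"
    by (rule expectation_traj_compress[OF assms abs_hist_reward_le])
  finally show ?thesis .
qed

text \<open>A pull of arm \<open>a\<close> at round \<open>s + 1\<close> earns \<open>\<theta>\<^sub>a \<tau>\<^sub>j\<close> in expectation, where \<open>j\<close> is the
  number of later rounds (capped at \<open>m\<close>) during which its conversion can still be collected.\<close>

lemma expected_reward_eq_sum_pull_prob:
  assumes vp: "valid_policy K \<pi>" and th: "\<forall>k\<in>{1..K}. 0 \<le> \<theta> k \<and> \<theta> k \<le> 1"
  shows "expected_reward m \<pi> \<theta> \<delta> T =
    (\<Sum>s<T. tau \<delta> (min m (T - Suc s)) * (\<Sum>a\<in>{1..K}. \<theta> a * pull_prob K m \<pi> \<theta> \<delta> a s))"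
proof -
  have "expected_reward m \<pi> \<theta> \<delta> T = hist_expect K m \<pi> \<theta> \<delta> T
      (\<lambda>h. \<Sum>s<T. (\<lambda>s (a, z). if z \<le> min m (T - Suc s) then 1 else (0::real)) s (h ! s))"
    unfolding expected_reward_eq_hist_expect[OF vp th] hist_reward_def by (simp add: split_def)
  also have "\<dots> = (\<Sum>s<T. hist_expect K m \<pi> \<theta> \<delta> s (\<lambda>h. \<Sum>a\<in>{1..K}. pmf (\<pi> (compressed_view m h)) a
      * (\<Sum>z\<in>{0..Suc m}. code_prob m \<delta> (\<theta> a) z * (if z \<le> min m (T - Suc s) then 1 else 0))))"
    by (subst hist_expect_additive[OF vp]) simp
  also have "\<dots> = (\<Sum>s<T. tau \<delta> (min m (T - Suc s)) * (\<Sum>a\<in>{1..K}. \<theta> a * pull_prob K m \<pi> \<theta> \<delta> a s))"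
    unfolding sum_code_prob_le[OF min.cobounded1] pull_prob_def
      sum_distrib_left hist_expect_cmult[symmetric] hist_expect_sum[symmetric]
    by (simp add: mult_ac)
  finally show ?thesis .
qed

definition expected_gap :: "nat \<Rightarrow> nat \<Rightarrow> policy \<Rightarrow> (nat \<Rightarrow> real) \<Rightarrow> nat pmf \<Rightarrow> nat \<Rightarrow> nat \<Rightarrow> real" where
  "expected_gap K m \<pi> \<theta> \<delta> ob s = (\<Sum>a\<in>{1..K}. (\<theta> ob - \<theta> a) * pull_prob K m \<pi> \<theta> \<delta> a s)"

lemma regret_eq_sum_expected_gap:
  assumes vp: "valid_policy K \<pi>" and th: "\<forall>k\<in>{1..K}. 0 \<le> \<theta> k \<and> \<theta> k \<le> 1"
    and ob: "opt_arm K \<theta> \<in> {1..K}"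
  shows "regret K m \<pi> \<theta> \<delta> T =
    (\<Sum>s<T. tau \<delta> (min m (T - Suc s)) * expected_gap K m \<pi> \<theta> \<delta> (opt_arm K \<theta>) s)"
proof -
  let ?ob = "opt_arm K \<theta>"
  have return_valid: "valid_policy K (\<lambda>_. return_pmf ?ob)"
    using ob by (simp add: valid_policy_def)
  have "expected_reward m (\<lambda>_. return_pmf ?ob) \<theta> \<delta> T = (\<Sum>s<T. tau \<delta> (min m (T - Suc s)) * \<theta> ?ob)"
    unfolding expected_reward_eq_sum_pull_prob[OF return_valid th] pull_prob_return[OF ob]
    using ob by (simp add: of_bool_def if_distrib[where f="\<lambda>x. _ * x"] cong: if_cong)
  also have "\<dots> = (\<Sum>s<T. tau \<delta> (min m (T - Suc s)) * (\<Sum>a\<in>{1..K}. \<theta> ?ob * pull_prob K m \<pi> \<theta> \<delta> a s))"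
    using sum_pull_prob[OF vp] by (simp add: sum_distrib_left[symmetric])
  finally show ?thesis
    unfolding regret_def expected_reward_eq_sum_pull_prob[OF vp th] expected_gap_def
    by (simp add: sum_subtractf right_diff_distrib left_diff_distrib)
qed

lemma expected_gap_nonneg:
  assumes "\<forall>k\<in>{1..K}. 0 \<le> \<theta> k \<and> \<theta> k \<le> 1" "valid_policy K \<pi>" "\<forall>a\<in>{1..K}. \<theta> a \<le> \<theta> ob"
  shows "0 \<le> expected_gap K m \<pi> \<theta> \<delta> ob s"
  unfolding expected_gap_def using assms pull_prob_nonneg[OF assms(1,2)]
  by (intro sum_nonneg mult_nonneg_nonneg) auto

lemma nonpull_gap_le_expected_gap:
  assumes th: "\<forall>k\<in>{1..K}. 0 \<le> \<theta> k \<and> \<theta> k \<le> 1" and vp: "valid_policy K \<pi>"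
    and k: "k \<in> {1..K}" and gap: "\<forall>a\<in>{1..K}. a \<noteq> k \<longrightarrow> \<Delta> \<le> \<theta> k - \<theta> a"
  shows "\<Delta> * (1 - pull_prob K m \<pi> \<theta> \<delta> k s) \<le> expected_gap K m \<pi> \<theta> \<delta> k s"
proof -
  let ?w = "\<lambda>a. pull_prob K m \<pi> \<theta> \<delta> a s"
  have "\<Delta> * (1 - ?w k) = (\<Sum>a\<in>{1..K}. (if a = k then 0 else \<Delta>) * ?w a)"
  proof -
    have "(\<Sum>a\<in>{1..K}. (if a = k then 0 else \<Delta>) * ?w a) = (\<Sum>a\<in>{1..K}. \<Delta> * ?w a - (if a = k then \<Delta> * ?w a else 0))"
      by (intro sum.cong refl) auto
    also have "\<dots> = \<Delta> * (1 - ?w k)"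
      using k sum_pull_prob[OF vp, of m \<theta> \<delta> s]
      by (simp add: sum_subtractf sum_distrib_left[symmetric] right_diff_distrib)
    finally show ?thesis by simp
  qed
  also have "\<dots> \<le> expected_gap K m \<pi> \<theta> \<delta> k s"
    unfolding expected_gap_def using gap pull_prob_nonneg[OF th vp]
    by (intro sum_mono mult_right_mono) auto
  finally show ?thesis .
qed

text \<open>Rounds \<open>1, \<dots>, n\<close> are followed by a full window of \<open>m\<close> rounds before the horizon \<open>n + m\<close>.\<close>

lemma regret_ge_sum_expected_gap:
  assumes "valid_policy K \<pi>" and "\<forall>k\<in>{1..K}. 0 \<le> \<theta> k \<and> \<theta> k \<le> 1"
    and "opt_arm K \<theta> \<in> {1..K}" and "\<forall>a\<in>{1..K}. \<theta> a \<le> \<theta> (opt_arm K \<theta>)"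
  shows "tau \<delta> m * (\<Sum>s<n. expected_gap K m \<pi> \<theta> \<delta> (opt_arm K \<theta>) s) \<le> regret K m \<pi> \<theta> \<delta> (n + m)"
proof -
  let ?g = "\<lambda>s. tau \<delta> (min m (n + m - Suc s)) * expected_gap K m \<pi> \<theta> \<delta> (opt_arm K \<theta>) s"
  have "tau \<delta> m * (\<Sum>s<n. expected_gap K m \<pi> \<theta> \<delta> (opt_arm K \<theta>) s) = (\<Sum>s<n. ?g s)"
    by (simp add: sum_distrib_left min_absorb1)
  also have "\<dots> \<le> (\<Sum>s<n + m. ?g s)"
    using expected_gap_nonneg[OF assms(2,1,4)] by (intro sum_mono2) (auto simp: tau_def)
  also have "\<dots> = regret K m \<pi> \<theta> \<delta> (n + m)"
    by (rule regret_eq_sum_expected_gap[OF assms(1-3), symmetric])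
  finally show ?thesis .
qed

section \<open>Information inequalities\<close>

lemma log_sum_inequality:
  fixes a b :: "'i \<Rightarrow> real"
  assumes fin: "finite S" and nn: "\<And>i. i \<in> S \<Longrightarrow> 0 \<le> a i \<and> 0 \<le> b i \<and> (0 < a i \<longrightarrow> 0 < b i)"
  shows "(\<Sum>i\<in>S. a i) * ln ((\<Sum>i\<in>S. a i) / (\<Sum>i\<in>S. b i)) \<le> (\<Sum>i\<in>S. a i * ln (a i / b i))"
proof (cases "(\<Sum>i\<in>S. a i) = 0")
  case True
  then have "\<forall>i\<in>S. a i = 0" using sum_nonneg_eq_0_iff[OF fin] nn by blast
  then show ?thesis using True by simp
next
  case False
  define A where "A = (\<Sum>i\<in>S. a i)"
  define B where "B = (\<Sum>i\<in>S. b i)"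
  obtain j where j: "j \<in> S" "0 < a j"
    using False nn by (metis (no_types, lifting) order_le_less sum.neutral)
  have A0: "0 < A" using False nn unfolding A_def by (metis order_le_less sum_nonneg)
  have B0: "0 < B"
    using nn j fin member_le_sum[of j S b] unfolding B_def by fastforce
  have pointwise: "a i * ln (A / B) + a i - b i * (A / B) \<le> a i * ln (a i / b i)" if i: "i \<in> S" for i
  proof (cases "a i = 0")
    case True
    then show ?thesis using nn[OF i] A0 B0 by simp
  next
    case False
    then have ai: "0 < a i" and bi: "0 < b i" using nn[OF i] by auto
    define y where "y = (b i * A) / (a i * B)"
    have y0: "0 < y" unfolding y_def using ai bi A0 B0 by simp
    have "a i / b i = (A / B) / y" unfolding y_def using ai bi A0 B0 by (simp add: field_simps)
    then have "ln (a i / b i) = ln (A / B) - ln y"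
      using y0 A0 B0 by (simp add: ln_div ln_mult)
    then have "a i * ln (a i / b i) = a i * ln (A / B) - a i * ln y"
      by (simp add: right_diff_distrib)
    moreover have "a i * ln y \<le> a i * (y - 1)"
      using ln_le_minus_one[OF y0] ai by (simp add: mult_left_mono)
    moreover have "a i * (y - 1) = b i * (A / B) - a i"
      unfolding y_def using ai B0 by (simp add: field_simps)
    ultimately show ?thesis by simp
  qed
  have "A * ln (A / B) = (\<Sum>i\<in>S. a i * ln (A / B) + a i - b i * (A / B))"
    using B0 unfolding sum.distrib sum_subtractf sum_distrib_right[symmetric] A_def[symmetric] B_def[symmetric]
    by simp
  also have "\<dots> \<le> (\<Sum>i\<in>S. a i * ln (a i / b i))"
    by (intro sum_mono pointwise)
  finally show ?thesis unfolding A_def B_def .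
qed

lemma diff_le_mult_ln_div:
  fixes a b :: real
  assumes "0 < a" "0 < b"
  shows "a - b \<le> a * ln (a / b)"
proof -
  have "ln (b / a) \<le> b / a - 1" using assms by (intro ln_le_minus_one) simp
  then have "a * (1 - b / a) \<le> a * ln (a / b)"
    using assms by (intro mult_left_mono) (simp_all add: ln_div)
  moreover have "a * (1 - b / a) = a - b"
    using assms by (simp add: field_simps)
  ultimately show ?thesis by simp
qed

lemma mult_ln_ge_minus_one:
  fixes y :: real
  assumes "0 \<le> y"
  shows "-1 \<le> y * ln y"
proof (cases "y = 0")
  case False
  with assms have "0 < y" by simp
  have "y - 1 \<le> y * ln (y / 1)"
    using \<open>0 < y\<close> by (intro diff_le_mult_ln_div) simp_all
  then show ?thesis using \<open>0 < y\<close> by simp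
qed simp

text \<open>A crude form of the bound \<open>d(p, q) \<ge> (1 - p) ln (1 / (1 - q)) - ln 2\<close>, which suffices
  because only the growth of \<open>ln (1 / (1 - q))\<close> matters.\<close>

lemma kl_bern_ge_ln_complement:
  assumes p: "0 \<le> p" "p \<le> 1" and q: "0 \<le> q" "q < 1"
  shows "(1 - p) * ln (1 / (1 - q)) - 2 \<le> kl_bern p q"
proof -
  have first: "-1 \<le> p * ln (p / q)"
  proof (cases "p = 0 \<or> q = 0")
    case False
    then have "p - q \<le> p * ln (p / q)" using p q by (intro diff_le_mult_ln_div) auto
    then show ?thesis using p q by linarith
  qed auto
  have second: "(1 - p) * ln (1 / (1 - q)) - 1 \<le> (1 - p) * ln ((1 - p) / (1 - q))"
  proof (cases "p = 1")
    case False
    then have "(1 - p) * ln ((1 - p) / (1 - q)) = (1 - p) * ln (1 - p) + (1 - p) * ln (1 / (1 - q))"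
      using p q by (simp add: ln_div algebra_simps)
    moreover have "-1 \<le> (1 - p) * ln (1 - p)" using p by (intro mult_ln_ge_minus_one) simp
    ultimately show ?thesis by simp
  qed simp
  show ?thesis using first second unfolding kl_bern_def by simp
qed

text \<open>Data processing for a \<open>[0, 1]\<close>-valued statistic \<open>Z\<close>: split every mass \<open>P x\<close> into
  \<open>P x Z x\<close> and \<open>P x (1 - Z x)\<close> and apply the log-sum inequality to each half.\<close>

lemma kl_bern_le_relative_entropy:
  fixes P Q Z :: "'i \<Rightarrow> real"
  assumes fin: "finite S"
    and nn: "\<And>x. x \<in> S \<Longrightarrow> 0 \<le> P x \<and> 0 \<le> Q x \<and> (0 < P x \<longrightarrow> 0 < Q x) \<and> 0 \<le> Z x \<and> Z x \<le> 1"
    and sP: "(\<Sum>x\<in>S. P x) = 1" and sQ: "(\<Sum>x\<in>S. Q x) = 1"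
  shows "kl_bern (\<Sum>x\<in>S. P x * Z x) (\<Sum>x\<in>S. Q x * Z x) \<le> (\<Sum>x\<in>S. P x * ln (P x / Q x))"
proof -
  have split: "P x * ln (P x / Q x) =
      P x * Z x * ln (P x * Z x / (Q x * Z x))
      + P x * (1 - Z x) * ln (P x * (1 - Z x) / (Q x * (1 - Z x)))" if x: "x \<in> S" for x
  proof (cases "P x = 0 \<or> Z x = 0 \<or> Z x = 1")
    case False
    then have "P x * Z x / (Q x * Z x) = P x / Q x" "P x * (1 - Z x) / (Q x * (1 - Z x)) = P x / Q x"
      by auto
    then show ?thesis by (simp add: algebra_simps)
  qed auto
  have "(\<Sum>x\<in>S. P x * Z x) * ln ((\<Sum>x\<in>S. P x * Z x) / (\<Sum>x\<in>S. Q x * Z x))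
      \<le> (\<Sum>x\<in>S. P x * Z x * ln (P x * Z x / (Q x * Z x)))"
    by (rule log_sum_inequality[OF fin]) (use nn in \<open>force simp: zero_less_mult_iff\<close>)
  moreover have "(\<Sum>x\<in>S. P x * (1 - Z x)) * ln ((\<Sum>x\<in>S. P x * (1 - Z x)) / (\<Sum>x\<in>S. Q x * (1 - Z x)))
      \<le> (\<Sum>x\<in>S. P x * (1 - Z x) * ln (P x * (1 - Z x) / (Q x * (1 - Z x))))"
    by (rule log_sum_inequality[OF fin]) (use nn in \<open>force simp: zero_less_mult_iff\<close>)
  moreover have "(\<Sum>x\<in>S. P x * (1 - Z x)) = 1 - (\<Sum>x\<in>S. P x * Z x)"
    "(\<Sum>x\<in>S. Q x * (1 - Z x)) = 1 - (\<Sum>x\<in>S. Q x * Z x)"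
    using sP sQ by (simp_all add: right_diff_distrib sum_subtractf)
  ultimately show ?thesis
    unfolding kl_bern_def by (simp add: split sum.distrib)
qed

lemma kl_bern_pos:
  assumes "0 < p" "p < 1" "0 < q" "q < 1" "p \<noteq> q"
  shows "0 < kl_bern p q"
proof -
  have "ln (q / p) \<noteq> q / p - 1"
    using assms ln_eq_minus_one[of "q / p"] by auto
  then have "ln (q / p) < q / p - 1"
    using assms ln_le_minus_one[of "q / p"] by simp
  then have "p * (1 - q / p) < p * ln (p / q)"
    using assms by (intro mult_strict_left_mono) (simp_all add: ln_div)
  moreover have "(1 - p) * (1 - (1 - q) / (1 - p)) \<le> (1 - p) * ln ((1 - p) / (1 - q))"
    using assms ln_le_minus_one[of "(1 - q) / (1 - p)"] by (intro mult_left_mono) (simp_all add: ln_div)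
  moreover have "p * (1 - q / p) + (1 - p) * (1 - (1 - q) / (1 - p)) = 0"
    using assms by (simp add: field_simps)
  ultimately show ?thesis unfolding kl_bern_def by linarith
qed

lemma exists_rate_above_kl_bern_less:
  assumes "0 < p" "p < 1" "0 < t" "0 < t * y" "t * y < 1" "y < 1"
    and "c * kl_bern p (t * y) < 1"
  shows "\<exists>x. y < x \<and> x < 1 \<and> c * kl_bern p (t * x) < 1"
proof -
  have "((\<lambda>x. c * kl_bern p (t * x)) \<longlongrightarrow> c * kl_bern p (t * y)) (at_right y)"
    unfolding kl_bern_def using assms by (intro tendsto_intros) auto
  then have "eventually (\<lambda>x. c * kl_bern p (t * x) < 1) (at_right y)"
    using assms(7) by (rule order_tendstoD(2))
  moreover have "eventually (\<lambda>x. y < x \<and> x < 1) (at_right y)"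
    unfolding eventually_at_right_field using assms(6) by auto
  ultimately have "eventually (\<lambda>x. y < x \<and> x < 1 \<and> c * kl_bern p (t * x) < 1) (at_right y)"
    by eventually_elim auto
  then show ?thesis
    using eventually_happens[of _ "at_right y"] trivial_limit_at_right_real by blast
qed

section \<open>Change of measure\<close>

lemma code_prob_pos_transfer:
  assumes "z \<le> Suc m" "0 < x'" "x' < 1" "0 < code_prob m \<delta> x z"
  shows "0 < code_prob m \<delta> x' z"
proof (cases "z \<le> m")
  case True
  with assms have "0 < pmf \<delta> z"
    by (simp add: code_prob_def) (metis pmf_nonneg order_le_less mult_zero_right less_irrefl)
  with True assms show ?thesis by (simp add: code_prob_def)
next
  case False
  have "x' * tau \<delta> m \<le> x'"
    using assms by (intro mult_left_le) (auto simp: tau_def)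
  then have "x' * tau \<delta> m < 1" using assms by linarith
  with False assms show ?thesis by (simp add: code_prob_def)
qed

lemma hist_prob_factors_pos:
  assumes h: "h \<in> hists K m n" and th: "\<forall>k\<in>{1..K}. 0 \<le> \<theta> k \<and> \<theta> k \<le> 1"
    and th': "\<forall>k\<in>{1..K}. 0 < \<theta>' k \<and> \<theta>' k < 1"
    and P: "hist_prob m \<pi> \<theta> \<delta> h \<noteq> 0" and s: "s < n"
  shows "0 < pmf (\<pi> (compressed_view m (take s h))) (fst (h ! s))"
    and "0 < code_prob m \<delta> (\<theta> (fst (h ! s))) (snd (h ! s))"
    and "0 < code_prob m \<delta> (\<theta>' (fst (h ! s))) (snd (h ! s))"
proof -
  have "length h = n" using h by (simp add: hists_def)
  then have "h ! s \<in> set h" using s by simp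
  then have mem: "fst (h ! s) \<in> {1..K}" "snd (h ! s) \<le> Suc m"
    using h unfolding hists_def by auto
  have "pmf (\<pi> (compressed_view m (take s h))) (fst (h ! s)) * code_prob m \<delta> (\<theta> (fst (h ! s))) (snd (h ! s)) \<noteq> 0"
    using P s \<open>length h = n\<close> unfolding hist_prob_def by (auto simp: prod_zero_iff)
  moreover have "0 \<le> code_prob m \<delta> (\<theta> (fst (h ! s))) (snd (h ! s))"
    using th mem by (auto intro: code_prob_nonneg)
  ultimately show pos: "0 < pmf (\<pi> (compressed_view m (take s h))) (fst (h ! s))"
    and pos_code: "0 < code_prob m \<delta> (\<theta> (fst (h ! s))) (snd (h ! s))"
    by (auto simp: order_le_less)
  show "0 < code_prob m \<delta> (\<theta>' (fst (h ! s))) (snd (h ! s))"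
    using code_prob_pos_transfer[OF mem(2) _ _ pos_code] th' mem by auto
qed

lemma hist_prob_pos_transfer:
  assumes "h \<in> hists K m n" and "\<forall>k\<in>{1..K}. 0 \<le> \<theta> k \<and> \<theta> k \<le> 1"
    and "\<forall>k\<in>{1..K}. 0 < \<theta>' k \<and> \<theta>' k < 1" and "0 < hist_prob m \<pi> \<theta> \<delta> h"
  shows "0 < hist_prob m \<pi> \<theta>' \<delta> h"
proof -
  have "length h = n" using assms(1) by (simp add: hists_def)
  moreover have "hist_prob m \<pi> \<theta> \<delta> h \<noteq> 0" using assms(4) by simp
  note pos = hist_prob_factors_pos(1,3)[OF assms(1-3) this]
  ultimately show ?thesis
    unfolding hist_prob_def using pos by (intro prod_pos mult_pos_pos) auto
qed

lemma ln_hist_prob_ratio: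
  assumes h: "h \<in> hists K m n" and th: "\<forall>k\<in>{1..K}. 0 \<le> \<theta> k \<and> \<theta> k \<le> 1"
    and th': "\<forall>k\<in>{1..K}. 0 < \<theta>' k \<and> \<theta>' k < 1" and P: "hist_prob m \<pi> \<theta> \<delta> h \<noteq> 0"
  shows "ln (hist_prob m \<pi> \<theta> \<delta> h / hist_prob m \<pi> \<theta>' \<delta> h) =
    (\<Sum>s<n. ln (code_prob m \<delta> (\<theta> (fst (h ! s))) (snd (h ! s)) / code_prob m \<delta> (\<theta>' (fst (h ! s))) (snd (h ! s))))"
proof -
  let ?p = "\<lambda>s. pmf (\<pi> (compressed_view m (take s h))) (fst (h ! s))"
  let ?r = "\<lambda>\<rho> s. code_prob m \<delta> (\<rho> (fst (h ! s))) (snd (h ! s))"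
  note pos = hist_prob_factors_pos[OF h th th' P]
  have len: "length h = n" using h by (simp add: hists_def)
  have "hist_prob m \<pi> \<theta> \<delta> h / hist_prob m \<pi> \<theta>' \<delta> h = (\<Prod>s<n. (?p s * ?r \<theta> s) / (?p s * ?r \<theta>' s))"
    unfolding hist_prob_def len by (rule prod_dividef[symmetric])
  also have "\<dots> = (\<Prod>s<n. ?r \<theta> s / ?r \<theta>' s)"
  proof (intro prod.cong refl)
    fix s assume "s \<in> {..<n}"
    then have "0 < ?p s" using pos(1) by simp
    then show "(?p s * ?r \<theta> s) / (?p s * ?r \<theta>' s) = ?r \<theta> s / ?r \<theta>' s" by simp
  qed
  finally have "ln (hist_prob m \<pi> \<theta> \<delta> h / hist_prob m \<pi> \<theta>' \<delta> h) = ln (\<Prod>s<n. ?r \<theta> s / ?r \<theta>' s)"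
    by simp
  also have "\<dots> = (\<Sum>s<n. ln (?r \<theta> s / ?r \<theta>' s))"
    using pos(2,3) by (intro ln_prod) (auto simp: less_imp_neq[symmetric])
  finally show ?thesis .
qed

definition arm_pulls :: "nat \<Rightarrow> nat \<Rightarrow> (nat \<times> nat) list \<Rightarrow> real" where
  "arm_pulls k n h = (\<Sum>s<n. if fst (h ! s) = k then 1 else 0)"

lemma arm_pulls_bounds: "0 \<le> arm_pulls k n h" "arm_pulls k n h \<le> n"
proof -
  show "0 \<le> arm_pulls k n h" unfolding arm_pulls_def by (intro sum_nonneg) simp
  have "arm_pulls k n h \<le> (\<Sum>s<n. 1)" unfolding arm_pulls_def by (intro sum_mono) simp
  then show "arm_pulls k n h \<le> n" by simp
qed

lemma hist_expect_arm_pulls: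
  assumes vp: "valid_policy K \<pi>"
  shows "hist_expect K m \<pi> \<theta> \<delta> n (arm_pulls k n) = (\<Sum>s<n. pull_prob K m \<pi> \<theta> \<delta> k s)"
proof -
  have pulls_eq: "arm_pulls k n = (\<lambda>h. \<Sum>s<n. (\<lambda>s (a, z). if a = k then 1 else (0::real)) s (h ! s))"
    by (simp add: arm_pulls_def fun_eq_iff split_def)
  show ?thesis
    unfolding pulls_eq hist_expect_additive[OF vp, where f="\<lambda>s (a, z). if a = k then 1 else (0::real)"] pull_prob_def
  proof (intro sum.cong refl hist_expect_cong)
    fix s h
    let ?p = "pmf (\<pi> (compressed_view m h))"
    have "(\<Sum>a\<in>{1..K}. ?p a * (\<Sum>z\<in>{0..Suc m}. code_prob m \<delta> (\<theta> a) z * (if a = k then 1 else 0)))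
        = (\<Sum>a\<in>{1..K}. if a = k then ?p a else 0)"
    proof (intro sum.cong refl)
      fix a
      show "?p a * (\<Sum>z\<in>{0..Suc m}. code_prob m \<delta> (\<theta> a) z * (if a = k then 1 else 0)) = (if a = k then ?p a else 0)"
        by (cases "a = k") (simp_all only: simp_thms if_True if_False mult_1_right mult_zero_right sum_code_prob sum.neutral_const)
    qed
    also have "\<dots> = ?p k"
      using pmf_policy_outside[OF vp, of k] by (simp add: sum.delta')
    finally show "(\<Sum>a\<in>{1..K}. ?p a * (\<Sum>z\<in>{0..Suc m}. code_prob m \<delta> (\<theta> a) z
        * (case (a, z) of (a, z) \<Rightarrow> if a = k then 1 else 0))) = ?p k"
      by simp
  qed
qed

lemma kl_code_prob_eq_kl_bern:
  assumes t: "0 < tau \<delta> m" and "0 < y" and "0 < x"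
  shows "(\<Sum>z\<in>{0..Suc m}. code_prob m \<delta> y z * ln (code_prob m \<delta> y z / code_prob m \<delta> x z))
       = kl_bern (tau \<delta> m * y) (tau \<delta> m * x)"
proof -
  have "(\<Sum>z\<in>{0..m}. code_prob m \<delta> y z * ln (code_prob m \<delta> y z / code_prob m \<delta> x z))
      = (\<Sum>z\<in>{0..m}. pmf \<delta> z * (y * ln (y / x)))"
    using assms by (intro sum.cong refl) (auto simp: code_prob_def)
  also have "\<dots> = tau \<delta> m * y * ln ((tau \<delta> m * y) / (tau \<delta> m * x))"
    using t by (simp add: sum_distrib_right[symmetric] tau_eq_sum_pmf mult.assoc)
  finally show ?thesis
    by (simp add: sum.atLeast0_atMost_Suc kl_bern_def code_prob_def mult.commute)
qed

definition hist_kl :: "nat \<Rightarrow> nat \<Rightarrow> policy \<Rightarrow> (nat \<Rightarrow> real) \<Rightarrow> (nat \<Rightarrow> real) \<Rightarrow> nat pmf \<Rightarrow> nat \<Rightarrow> real" where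
  "hist_kl K m \<pi> \<theta> \<theta>' \<delta> n =
     (\<Sum>h\<in>hists K m n. hist_prob m \<pi> \<theta> \<delta> h * ln (hist_prob m \<pi> \<theta> \<delta> h / hist_prob m \<pi> \<theta>' \<delta> h))"

text \<open>Chain rule: the policy factors cancel, and so do the code factors of every arm other than \<open>k\<close>.\<close>

lemma hist_kl_eq_pulls:
  assumes vp: "valid_policy K \<pi>" and th: "\<forall>k\<in>{1..K}. 0 \<le> \<theta> k \<and> \<theta> k \<le> 1"
    and th': "\<forall>k\<in>{1..K}. 0 < \<theta>' k \<and> \<theta>' k < 1"
    and k: "k \<in> {1..K}" and same: "\<forall>a. a \<noteq> k \<longrightarrow> \<theta>' a = \<theta> a"
  shows "hist_kl K m \<pi> \<theta> \<theta>' \<delta> n = (\<Sum>s<n. pull_prob K m \<pi> \<theta> \<delta> k s) *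
           (\<Sum>z\<in>{0..Suc m}. code_prob m \<delta> (\<theta> k) z * ln (code_prob m \<delta> (\<theta> k) z / code_prob m \<delta> (\<theta>' k) z))"
proof -
  define Dk where "Dk = (\<Sum>z\<in>{0..Suc m}. code_prob m \<delta> (\<theta> k) z * ln (code_prob m \<delta> (\<theta> k) z / code_prob m \<delta> (\<theta>' k) z))"
  let ?f = "\<lambda>s (a, z). ln (code_prob m \<delta> (\<theta> a) z / code_prob m \<delta> (\<theta>' a) z)"
  have "hist_kl K m \<pi> \<theta> \<theta>' \<delta> n = hist_expect K m \<pi> \<theta> \<delta> n (\<lambda>h. \<Sum>s<n. ?f s (h ! s))"
    unfolding hist_kl_def hist_expect_def
  proof (intro sum.cong refl)
    fix h assume "h \<in> hists K m n"
    then show "hist_prob m \<pi> \<theta> \<delta> h * ln (hist_prob m \<pi> \<theta> \<delta> h / hist_prob m \<pi> \<theta>' \<delta> h)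
        = hist_prob m \<pi> \<theta> \<delta> h * (\<Sum>s<n. ?f s (h ! s))"
      by (cases "hist_prob m \<pi> \<theta> \<delta> h = 0") (simp_all add: ln_hist_prob_ratio[OF _ th th'] split_def)
  qed
  also have "\<dots> = (\<Sum>s<n. hist_expect K m \<pi> \<theta> \<delta> s (\<lambda>h. pmf (\<pi> (compressed_view m h)) k * Dk))"
    unfolding hist_expect_additive[OF vp, where f="?f"]
  proof (intro sum.cong refl hist_expect_cong)
    fix s h
    let ?p = "pmf (\<pi> (compressed_view m h))"
    have "ln (code_prob m \<delta> x z / code_prob m \<delta> x z) = 0" for x z
      by (cases "code_prob m \<delta> x z = 0") simp_all
    then have "?p a * (\<Sum>z\<in>{0..Suc m}. code_prob m \<delta> (\<theta> a) z * ?f s (a, z)) = (if a = k then ?p a * Dk else 0)" for a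
      using same by (cases "a = k") (simp_all add: Dk_def)
    then show "(\<Sum>a\<in>{1..K}. ?p a * (\<Sum>z\<in>{0..Suc m}. code_prob m \<delta> (\<theta> a) z * ?f s (a, z))) = ?p k * Dk"
      using k by (simp add: sum.delta)
  qed
  also have "\<dots> = (\<Sum>s<n. pull_prob K m \<pi> \<theta> \<delta> k s) * Dk"
    unfolding pull_prob_def sum_distrib_right by (simp add: hist_expect_cmult mult.commute)
  finally show ?thesis unfolding Dk_def .
qed

text \<open>Data processing applied to the statistic \<open>N\<^sub>k(n) / (n + 1)\<close>.\<close>

lemma pulls_kl_lower_bound:
  assumes vp: "valid_policy K \<pi>" and th: "\<forall>k\<in>{1..K}. 0 \<le> \<theta> k \<and> \<theta> k \<le> 1"
    and th': "\<forall>k\<in>{1..K}. 0 < \<theta>' k \<and> \<theta>' k < 1"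
    and k: "k \<in> {1..K}" and same: "\<forall>a. a \<noteq> k \<longrightarrow> \<theta>' a = \<theta> a"
    and t: "0 < tau \<delta> m" and pk: "0 < \<theta> k"
  shows "(1 - (\<Sum>s<n. pull_prob K m \<pi> \<theta> \<delta> k s) / (n + 1))
           * ln (1 / (1 - (\<Sum>s<n. pull_prob K m \<pi> \<theta>' \<delta> k s) / (n + 1))) - 2
     \<le> (\<Sum>s<n. pull_prob K m \<pi> \<theta> \<delta> k s) * kl_bern (tau \<delta> m * \<theta> k) (tau \<delta> m * \<theta>' k)"
proof -
  have th'': "\<forall>k\<in>{1..K}. 0 \<le> \<theta>' k \<and> \<theta>' k \<le> 1" using th' by auto
  define Z where "Z h = arm_pulls k n h / (n + 1)" for h
  have mean_Z: "(\<Sum>h\<in>hists K m n. hist_prob m \<pi> \<rho> \<delta> h * Z h) = (\<Sum>s<n. pull_prob K m \<pi> \<rho> \<delta> k s) / (n + 1)" for \<rho>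
    using hist_expect_cmult[of K m \<pi> \<rho> \<delta> n "1 / (n + 1)" "arm_pulls k n"]
    unfolding Z_def hist_expect_arm_pulls[OF vp] by (simp add: hist_expect_def)
  have total: "(\<Sum>h\<in>hists K m n. hist_prob m \<pi> \<rho> \<delta> h) = 1" for \<rho>
    using hist_expect_const[OF vp, of m \<rho> \<delta> n 1] by (simp add: hist_expect_def)
  have "(1 - (\<Sum>s<n. pull_prob K m \<pi> \<theta> \<delta> k s) / (n + 1))
           * ln (1 / (1 - (\<Sum>s<n. pull_prob K m \<pi> \<theta>' \<delta> k s) / (n + 1))) - 2
      \<le> kl_bern ((\<Sum>s<n. pull_prob K m \<pi> \<theta> \<delta> k s) / (n + 1)) ((\<Sum>s<n. pull_prob K m \<pi> \<theta>' \<delta> k s) / (n + 1))"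
    using sum_pull_prob_bounds[OF th vp, where n=n and k=k and m=m and \<delta>=\<delta>]
      sum_pull_prob_bounds[OF th'' vp, where n=n and k=k and m=m and \<delta>=\<delta>]
    by (intro kl_bern_ge_ln_complement) auto
  also have "\<dots> \<le> hist_kl K m \<pi> \<theta> \<theta>' \<delta> n"
    unfolding hist_kl_def mean_Z[symmetric]
  proof (rule kl_bern_le_relative_entropy[OF finite_hists _ total total])
    fix h assume h: "h \<in> hists K m n"
    show "0 \<le> hist_prob m \<pi> \<theta> \<delta> h \<and> 0 \<le> hist_prob m \<pi> \<theta>' \<delta> h
        \<and> (0 < hist_prob m \<pi> \<theta> \<delta> h \<longrightarrow> 0 < hist_prob m \<pi> \<theta>' \<delta> h) \<and> 0 \<le> Z h \<and> Z h \<le> 1"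
      using hist_prob_nonneg[OF th h] hist_prob_nonneg[OF th'' h] hist_prob_pos_transfer[OF h th th']
        arm_pulls_bounds[of k n h] unfolding Z_def by (auto simp: field_simps)
  qed
  also have "\<dots> = (\<Sum>s<n. pull_prob K m \<pi> \<theta> \<delta> k s) * kl_bern (tau \<delta> m * \<theta> k) (tau \<delta> m * \<theta>' k)"
    using th' k unfolding hist_kl_eq_pulls[OF vp th th' k same]
    by (subst kl_code_prob_eq_kl_bern[OF t pk]) auto
  finally show ?thesis .
qed

section \<open>Asymptotics\<close>

lemma eventually_le_ln_nat: "eventually (\<lambda>n::nat. M \<le> ln (real n)) sequentially"
  using filterlim_compose[OF ln_at_top filterlim_real_sequentially] by (simp add: filterlim_at_top)

lemma ln_inverse_complement_ge:
  fixes W' :: real and n m :: nat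
  assumes B: "0 < B" and m: "1 \<le> m" and \<gamma>: "0 < \<gamma>"
    and W': "W' \<le> real n" and gap: "real n - W' \<le> B * real (n + m) powr \<gamma>"
  shows "(1 - \<gamma>) * ln (real n + 1) - ln ((1 + B) * real m powr \<gamma>) \<le> ln (1 / (1 - W' / (real n + 1)))"
proof -
  have n1: "0 < real n + 1" by simp
  have q1: "0 < 1 - W' / (real n + 1)" using W' by (simp add: field_simps)
  define X where "X = real m powr \<gamma> * (real n + 1) powr \<gamma>"
  have "real (n + m) \<le> real m * (real n + 1)"
    using m mult_left_mono[of 1 "real m" "real n"] by (simp add: algebra_simps)
  then have nm: "real (n + m) powr \<gamma> \<le> X"
    unfolding X_def using \<gamma> by (simp add: powr_mono2 flip: powr_mult)
  moreover have "1 \<le> real (n + m) powr \<gamma>" using m \<gamma> by (intro ge_one_powr_ge_zero) auto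
  moreover have "B * real (n + m) powr \<gamma> \<le> B * X" using nm B by simp
  ultimately have "real n + 1 - W' \<le> (1 + B) * X"
    using gap by (simp add: distrib_right)
  have "1 - W' / (real n + 1) = (real n + 1 - W') / (real n + 1)"
    using n1 by (simp add: field_simps)
  also have "\<dots> \<le> (1 + B) * X / (real n + 1)"
    using n1 \<open>real n + 1 - W' \<le> (1 + B) * X\<close> by (simp add: divide_right_mono)
  also have "\<dots> = (1 + B) * real m powr \<gamma> * ((real n + 1) powr \<gamma> / (real n + 1))"
    unfolding X_def by simp
  also have "(real n + 1) powr \<gamma> / (real n + 1) = (real n + 1) powr (\<gamma> - 1)"
    using n1 by (simp add: powr_diff)
  finally have "1 - W' / (real n + 1) \<le> (1 + B) * real m powr \<gamma> * (real n + 1) powr (\<gamma> - 1)" .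
  then have "ln (1 - W' / (real n + 1)) \<le> ln ((1 + B) * real m powr \<gamma> * (real n + 1) powr (\<gamma> - 1))"
    using q1 by (subst ln_le_cancel_iff) (use B m in auto)
  also have "\<dots> = ln ((1 + B) * real m powr \<gamma>) + (\<gamma> - 1) * ln (real n + 1)"
    using B m by (simp add: ln_mult ln_powr)
  finally show ?thesis
    using q1 by (simp add: ln_div algebra_simps)
qed

lemma eventually_ln_le_ln_inverse_complement:
  fixes W' :: "nat \<Rightarrow> real"
  assumes B: "0 < B" and m: "1 \<le> m" and W': "\<And>n. W' n \<le> real n"
    and gap: "\<And>\<alpha>. 0 < \<alpha> \<Longrightarrow> \<alpha> < 1 \<Longrightarrow>
                eventually (\<lambda>n. real n - W' n \<le> B * real (n + m) powr \<alpha>) sequentially"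
    and \<beta>: "\<beta> < 1"
  shows "eventually (\<lambda>n. \<beta> * ln (real n) \<le> ln (1 / (1 - W' n / (real n + 1)))) sequentially"
proof -
  define \<gamma> where "\<gamma> = (1 - max \<beta> 0) / 2"
  have \<gamma>: "0 < \<gamma>" "\<gamma> < 1" using \<beta> by (auto simp: \<gamma>_def)
  have max_eq: "1 - 2 * \<gamma> = max \<beta> 0" by (simp add: \<gamma>_def field_simps)
  define C where "C = ln ((1 + B) * real m powr \<gamma>)"
  show ?thesis
    using gap[OF \<gamma>] eventually_le_ln_nat[of "C / \<gamma>"] eventually_ge_at_top[of 1]
  proof eventually_elim
    case (elim n)
    have "ln (real n) \<le> ln (real n + 1)" using elim by simp
    moreover have "C \<le> \<gamma> * ln (real n)" using elim \<gamma> by (simp add: field_simps)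
    moreover have "\<beta> * ln (real n) \<le> (1 - 2 * \<gamma>) * ln (real n)"
      using elim max_eq by (intro mult_right_mono) auto
    moreover have "(1 - \<gamma>) * ln (real n + 1) - C \<le> ln (1 / (1 - W' n / (real n + 1)))"
      unfolding C_def using elim \<gamma> by (intro ln_inverse_complement_ge[OF B m _ W']) auto
    ultimately show ?case
      using \<gamma> mult_left_mono[of "ln (real n)" "ln (real n + 1)" "1 - \<gamma>"] by (simp add: algebra_simps)
  qed
qed

text \<open>In the application \<open>a n = ln (1 / (1 - q n))\<close> with \<open>q n\<close> the frequency of the arm under
  the alternative model, while \<open>p n\<close> and \<open>W n\<close> are its frequency and expected number of pulls
  under the original one.\<close>

lemma eventually_ln_le_of_kl_bound:
  fixes W a p :: "nat \<Rightarrow> real"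
  assumes d: "0 < d" and c: "0 \<le> c" "c * d < 1"
    and a: "\<And>\<beta>. \<beta> < 1 \<Longrightarrow> eventually (\<lambda>n. \<beta> * ln (real n) \<le> a n) sequentially"
    and p: "p \<longlonglongrightarrow> 0"
    and bound: "\<And>n. (1 - p n) * a n - 2 \<le> W n * d"
  shows "eventually (\<lambda>n. c * ln (real n) \<le> W n) sequentially"
proof -
  define \<gamma> where "\<gamma> = (1 - c * d) / 4"
  have \<gamma>: "0 < \<gamma>" "\<gamma> \<le> 1 / 4" using c d by (auto simp: \<gamma>_def)
  have "1 - \<gamma> < 1" using \<gamma> by simp
  from order_tendstoD(2)[OF p \<gamma>(1)] a[OF this] eventually_le_ln_nat[of "1 / \<gamma>"]
    eventually_ge_at_top[of 1]
  show ?thesis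
  proof eventually_elim
    case (elim n)
    then have L: "0 \<le> ln (real n)" "1 \<le> \<gamma> * ln (real n)" using \<gamma> by (auto simp: field_simps)
    have "(1 - \<gamma>) * ((1 - \<gamma>) * ln (real n)) \<le> (1 - p n) * a n"
      using elim \<gamma> L by (intro mult_mono) auto
    moreover have "(1 - \<gamma>) * ((1 - \<gamma>) * ln (real n))
        = ln (real n) - 2 * (\<gamma> * ln (real n)) + \<gamma> * (\<gamma> * ln (real n))"
      by (simp add: algebra_simps)
    moreover have "0 \<le> \<gamma> * (\<gamma> * ln (real n))" using L \<gamma> by simp
    ultimately have "ln (real n) - 4 * (\<gamma> * ln (real n)) \<le> W n * d"
      using bound[of n] L by linarith
    moreover have "ln (real n) - 4 * (\<gamma> * ln (real n)) = c * d * ln (real n)"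
      by (simp add: \<gamma>_def field_simps)
    ultimately have "c * d * ln (real n) \<le> W n * d" by simp
    then show ?case using d by (simp add: mult.commute mult.left_commute)
  qed
qed

lemma tendsto_div_Suc_zero_of_sublinear:
  fixes W R :: "nat \<Rightarrow> real"
  assumes c: "0 < c" and m: "1 \<le> m" and W: "\<And>n. 0 \<le> W n" and WR: "\<And>n. c * W n \<le> R (n + m)"
    and R: "(\<lambda>T. R T / real T powr \<alpha>) \<longlonglongrightarrow> 0" and \<alpha>: "0 < \<alpha>" "\<alpha> \<le> 1"
  shows "(\<lambda>n. W n / (real n + 1)) \<longlonglongrightarrow> 0"
proof (rule tendsto_sandwich[OF _ _ tendsto_const])
  show "eventually (\<lambda>n. 0 \<le> W n / (real n + 1)) sequentially" using W by simp
  have "(\<lambda>n. R (n + m) / real (n + m) powr \<alpha>) \<longlonglongrightarrow> 0"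
    using LIMSEQ_ignore_initial_segment[OF R, of m] by simp
  from tendsto_mult[OF tendsto_const this, of "real m / c"]
  show "(\<lambda>n. real m / c * (R (n + m) / real (n + m) powr \<alpha>)) \<longlonglongrightarrow> 0"
    by simp
  show "eventually (\<lambda>n. W n / (real n + 1) \<le> real m / c * (R (n + m) / real (n + m) powr \<alpha>)) sequentially"
  proof (intro always_eventually allI)
    fix n
    have "0 \<le> c * W n" using c W[of n] by simp
    then have R0: "0 \<le> R (n + m)" using WR[of n] by linarith
    have "real (n + m) powr \<alpha> \<le> real (n + m)"
      using m \<alpha> powr_mono[of \<alpha> 1 "real (n + m)"] by simp
    also have "\<dots> \<le> real m * (real n + 1)"
      using m mult_left_mono[of 1 "real m" "real n"] by (simp add: algebra_simps)
    finally have P: "real (n + m) powr \<alpha> \<le> real m * (real n + 1)" .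
    have P0: "0 < real (n + m) powr \<alpha>" using m by simp
    have m0: "real m \<noteq> 0" using m by simp
    have "W n \<le> R (n + m) / c"
      using WR[of n] c by (simp add: pos_le_divide_eq mult.commute)
    then have "W n / (real n + 1) \<le> R (n + m) / c / (real n + 1)"
      by (rule divide_right_mono) simp
    also have "\<dots> = R (n + m) / (c * (real n + 1))"
      by simp
    also have "\<dots> = (real m * R (n + m)) / (real m * (c * (real n + 1)))"
      using m0 by simp
    also have "\<dots> = real m / c * (R (n + m) / (real m * (real n + 1)))"
      by (simp add: ac_simps)
    also have "\<dots> \<le> real m / c * (R (n + m) / real (n + m) powr \<alpha>)"
      using P P0 R0 c m by (intro mult_left_mono divide_left_mono mult_pos_pos) auto
    finally show "W n / (real n + 1) \<le> real m / c * (R (n + m) / real (n + m) powr \<alpha>)" .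
  qed
qed

lemma eventually_mult_ln_le_ln_diff:
  fixes c :: real
  assumes "c < 1"
  shows "eventually (\<lambda>T. c * ln (real T) \<le> ln (real (T - m))) sequentially"
  using eventually_le_ln_nat[of "ln 2 / (1 - c)"] eventually_ge_at_top[of "2 * m + 1"]
proof eventually_elim
  case (elim T)
  then have "real T / 2 \<le> real (T - m)" "0 < real T" by auto
  then have "ln (real T / 2) \<le> ln (real (T - m))"
    by (subst ln_le_cancel_iff) auto
  then have "ln (real T) - ln 2 \<le> ln (real (T - m))"
    using \<open>0 < real T\<close> by (simp add: ln_div)
  moreover have "ln 2 \<le> (1 - c) * ln (real T)"
    using elim assms by (simp add: field_simps)
  ultimately show ?case by (simp add: algebra_simps)
qed

lemma Liminf_ge_of_eventually_gt:
  assumes "\<And>r. r < S \<Longrightarrow> eventually (\<lambda>T. r < f T) sequentially"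
  shows "ereal S \<le> Liminf sequentially (\<lambda>T. ereal (f T))"
proof (subst le_Liminf_iff, intro allI impI)
  fix y :: ereal assume y: "y < ereal S"
  show "eventually (\<lambda>T. y < ereal (f T)) sequentially"
  proof (cases y)
    case (real r)
    with y assms[of r] show ?thesis by (auto elim!: eventually_mono)
  qed (use y in simp_all)
qed

section \<open>The lower bound\<close>

lemma opt_arm_unique:
  assumes "ob \<in> {1..K}" and "\<forall>j\<in>{1..K}. j \<noteq> ob \<longrightarrow> \<theta> j < \<theta> ob"
  shows "opt_arm K \<theta> = ob"
  unfolding opt_arm_def
proof (rule some_equality)
  show "ob \<in> {1..K} \<and> (\<forall>j\<in>{1..K}. \<theta> j \<le> \<theta> ob)"
    using assms by force
  show "k = ob" if "k \<in> {1..K} \<and> (\<forall>j\<in>{1..K}. \<theta> j \<le> \<theta> k)" for k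
    using that assms by force
qed

locale censored_bandit =
  fixes K m :: nat and \<delta> :: "nat pmf" and \<theta> :: "nat \<Rightarrow> real" and \<pi> :: policy
  assumes m: "m \<ge> 1" and K: "K \<ge> 1"
    and rates: "\<forall>k\<in>{1..K}. 0 < \<theta> k \<and> \<theta> k < 1"
    and best: "\<forall>k\<in>{2..K}. \<theta> k < \<theta> 1"
    and tau_pos: "tau \<delta> m > 0"
    and vp: "valid_policy K \<pi>"
    and efficient: "uniformly_efficient K m \<delta> \<pi>"
begin

lemma rates_closed: "\<forall>k\<in>{1..K}. 0 \<le> \<theta> k \<and> \<theta> k \<le> 1"
  using rates by auto

lemma rate_le_rate_1: "\<forall>a\<in>{1..K}. \<theta> a \<le> \<theta> 1"
proof
  fix a assume "a \<in> {1..K}"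
  then have "a = 1 \<or> a \<in> {2..K}" by auto
  then show "\<theta> a \<le> \<theta> 1" using best by (auto simp: less_imp_le)
qed

lemma opt_arm_eq_1: "opt_arm K \<theta> = 1"
  using K best by (intro opt_arm_unique) auto

lemma tau_le_1: "tau \<delta> m \<le> 1"
  by (simp add: tau_def)

lemma rate_1_bounds: "0 < \<theta> 1" "\<theta> 1 < 1"
  using rates K by auto

lemma scaled_rate_bounds:
  assumes "0 < x" "x < 1"
  shows "0 < tau \<delta> m * x" "tau \<delta> m * x < 1"
  using assms tau_pos tau_le_1 mult_le_less_imp_less[of "tau \<delta> m" 1 x 1] by auto

lemma regret_sublinear:
  assumes "\<forall>k\<in>{1..K}. 0 \<le> \<theta>' k \<and> \<theta>' k \<le> 1" and "0 < \<alpha>" "\<alpha> < 1"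
  shows "(\<lambda>T. regret K m \<pi> \<theta>' \<delta> T / real T powr \<alpha>) \<longlonglongrightarrow> 0"
  using efficient assms unfolding uniformly_efficient_def by simp

lemma regret_ge_weighted_pulls:
  "tau \<delta> m * (\<Sum>k\<in>{2..K}. (\<theta> 1 - \<theta> k) * (\<Sum>s<n. pull_prob K m \<pi> \<theta> \<delta> k s)) \<le> regret K m \<pi> \<theta> \<delta> (n + m)"
proof -
  have "{1..K} = insert 1 {2..K}" using K by auto
  then have "(\<Sum>s<n. expected_gap K m \<pi> \<theta> \<delta> 1 s)
      = (\<Sum>k\<in>{2..K}. (\<theta> 1 - \<theta> k) * (\<Sum>s<n. pull_prob K m \<pi> \<theta> \<delta> k s))"
    unfolding expected_gap_def sum_distrib_left by (subst sum.swap) simp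
  then show ?thesis
    using regret_ge_sum_expected_gap[OF vp rates_closed, of \<delta> m n] opt_arm_eq_1 K rate_le_rate_1 by simp
qed

lemma pull_frequency_tendsto_0:
  assumes k: "k \<in> {2..K}"
  shows "(\<lambda>n. (\<Sum>s<n. pull_prob K m \<pi> \<theta> \<delta> k s) / (real n + 1)) \<longlonglongrightarrow> 0"
proof (rule tendsto_div_Suc_zero_of_sublinear[OF _ m])
  show "0 < tau \<delta> m * (\<theta> 1 - \<theta> k)" using tau_pos best k by simp
  show "0 \<le> (\<Sum>s<n. pull_prob K m \<pi> \<theta> \<delta> k s)" for n
    by (rule sum_pull_prob_bounds[OF rates_closed vp])
  show "tau \<delta> m * (\<theta> 1 - \<theta> k) * (\<Sum>s<n. pull_prob K m \<pi> \<theta> \<delta> k s) \<le> regret K m \<pi> \<theta> \<delta> (n + m)" for n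
  proof -
    have pull_term: "(\<theta> 1 - \<theta> k) * (\<Sum>s<n. pull_prob K m \<pi> \<theta> \<delta> k s)
        \<le> (\<Sum>j\<in>{2..K}. (\<theta> 1 - \<theta> j) * (\<Sum>s<n. pull_prob K m \<pi> \<theta> \<delta> j s))"
      using k best pull_prob_nonneg[OF rates_closed vp]
      by (intro member_le_sum mult_nonneg_nonneg sum_nonneg) (auto simp: less_imp_le)
    show ?thesis
      using order_trans[OF mult_left_mono[OF pull_term less_imp_le[OF tau_pos]] regret_ge_weighted_pulls]
      by (simp add: mult.assoc)
  qed
  show "(\<lambda>T. regret K m \<pi> \<theta> \<delta> T / real T powr (1 / 2)) \<longlonglongrightarrow> 0"
    by (rule regret_sublinear[OF rates_closed]) simp_all
qed simp_all

text \<open>The alternative model raises the rate of arm \<open>k\<close> to \<open>x > \<theta>\<^sub>1\<close>, making \<open>k\<close> the unique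
  optimal arm; uniform efficiency then forces almost all of its rounds to be spent on \<open>k\<close>.\<close>

lemma alternative_pull_deficit:
  assumes k: "k \<in> {2..K}" and x: "\<theta> 1 < x" "x < 1" and \<alpha>: "0 < \<alpha>" "\<alpha> < 1"
  shows "eventually (\<lambda>n. real n - (\<Sum>s<n. pull_prob K m \<pi> (\<theta>(k := x)) \<delta> k s)
           \<le> 1 / (tau \<delta> m * (x - \<theta> 1)) * real (n + m) powr \<alpha>) sequentially"
proof -
  let ?\<theta>' = "\<theta>(k := x)"
  let ?W = "\<lambda>n. \<Sum>s<n. pull_prob K m \<pi> ?\<theta>' \<delta> k s"
  have kK: "k \<in> {1..K}" using k by auto
  have rates': "\<forall>j\<in>{1..K}. 0 \<le> ?\<theta>' j \<and> ?\<theta>' j \<le> 1"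
    using rates_closed x rate_1_bounds by auto
  have gap: "\<forall>a\<in>{1..K}. a \<noteq> k \<longrightarrow> x - \<theta> 1 \<le> ?\<theta>' k - ?\<theta>' a"
    using rate_le_rate_1 by auto
  have opt: "opt_arm K ?\<theta>' = k"
    using gap x by (intro opt_arm_unique[OF kK]) auto
  have opt_le: "\<forall>a\<in>{1..K}. ?\<theta>' a \<le> ?\<theta>' (opt_arm K ?\<theta>')"
    using gap x unfolding opt by auto
  have "(\<lambda>T. regret K m \<pi> ?\<theta>' \<delta> T / real T powr \<alpha>) \<longlonglongrightarrow> 0"
    by (rule regret_sublinear[OF rates' \<alpha>])
  then have "eventually (\<lambda>T. regret K m \<pi> ?\<theta>' \<delta> T / real T powr \<alpha> < 1) sequentially"
    by (rule order_tendstoD(2)) simp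
  then have "eventually (\<lambda>n. regret K m \<pi> ?\<theta>' \<delta> (n + m) / real (n + m) powr \<alpha> < 1) sequentially"
    by (rule eventually_sequentially_seg[THEN iffD2])
  then show ?thesis
  proof (rule eventually_mono)
    fix n assume "regret K m \<pi> ?\<theta>' \<delta> (n + m) / real (n + m) powr \<alpha> < 1"
    moreover have "0 < real (n + m) powr \<alpha>" using m by simp
    ultimately have regret: "regret K m \<pi> ?\<theta>' \<delta> (n + m) < real (n + m) powr \<alpha>"
      by (simp add: divide_less_eq)
    have "(x - \<theta> 1) * (real n - ?W n) = (\<Sum>s<n. (x - \<theta> 1) * (1 - pull_prob K m \<pi> ?\<theta>' \<delta> k s))"
      by (simp add: sum_subtractf right_diff_distrib sum_distrib_left mult.commute)
    also have "\<dots> \<le> (\<Sum>s<n. expected_gap K m \<pi> ?\<theta>' \<delta> k s)"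
      by (intro sum_mono nonpull_gap_le_expected_gap[OF rates' vp kK gap])
    finally have "tau \<delta> m * (x - \<theta> 1) * (real n - ?W n) \<le> tau \<delta> m * (\<Sum>s<n. expected_gap K m \<pi> ?\<theta>' \<delta> k s)"
      using tau_pos by (simp add: mult.assoc)
    also have "\<dots> \<le> regret K m \<pi> ?\<theta>' \<delta> (n + m)"
      by (rule regret_ge_sum_expected_gap[OF vp rates' _ opt_le, of \<delta> m n, unfolded opt, OF kK])
    finally have "tau \<delta> m * (x - \<theta> 1) * (real n - ?W n) \<le> real (n + m) powr \<alpha>"
      using regret by simp
    moreover have "0 < tau \<delta> m * (x - \<theta> 1)" using tau_pos x by simp
    ultimately show "real n - ?W n \<le> 1 / (tau \<delta> m * (x - \<theta> 1)) * real (n + m) powr \<alpha>"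
      by (simp add: pos_le_divide_eq mult.commute)
  qed
qed

lemma eventually_pulls_ge:
  assumes k: "k \<in> {2..K}" and c: "0 \<le> c" "c * kl_bern (tau \<delta> m * \<theta> k) (tau \<delta> m * \<theta> 1) < 1"
  shows "eventually (\<lambda>n. c * ln (real n) \<le> (\<Sum>s<n. pull_prob K m \<pi> \<theta> \<delta> k s)) sequentially"
proof -
  have kK: "k \<in> {1..K}" and rate_k: "0 < \<theta> k" "\<theta> k < \<theta> 1" using k best rates by auto
  obtain x where x: "\<theta> 1 < x" "x < 1" and cx: "c * kl_bern (tau \<delta> m * \<theta> k) (tau \<delta> m * x) < 1"
    using exists_rate_above_kl_bern_less[OF scaled_rate_bounds[of "\<theta> k"] tau_pos
        scaled_rate_bounds[OF rate_1_bounds] rate_1_bounds(2) c(2)] rate_k rate_1_bounds by auto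
  define \<theta>' where "\<theta>' = \<theta>(k := x)"
  define W where "W n = (\<Sum>s<n. pull_prob K m \<pi> \<theta> \<delta> k s)" for n
  define W' where "W' n = (\<Sum>s<n. pull_prob K m \<pi> \<theta>' \<delta> k s)" for n
  define d where "d = kl_bern (tau \<delta> m * \<theta> k) (tau \<delta> m * x)"
  have rates': "\<forall>j\<in>{1..K}. 0 < \<theta>' j \<and> \<theta>' j < 1"
    using rates x rate_1_bounds unfolding \<theta>'_def by auto
  have d_pos: "0 < d"
    unfolding d_def using scaled_rate_bounds[of x] scaled_rate_bounds[of "\<theta> k"] x rate_k rate_1_bounds tau_pos
    by (intro kl_bern_pos) auto
  have same: "\<forall>a. a \<noteq> k \<longrightarrow> \<theta>' a = \<theta> a" and rate'_k: "\<theta>' k = x"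
    unfolding \<theta>'_def by simp_all
  have kl_bound: "(1 - W n / (real n + 1)) * ln (1 / (1 - W' n / (real n + 1))) - 2 \<le> W n * d" for n
    using pulls_kl_lower_bound[OF vp rates_closed rates' kK same tau_pos rate_k(1), of n]
    unfolding W_def W'_def d_def rate'_k by (simp add: add.commute)
  have W'_le: "W' n \<le> real n" for n
    unfolding W'_def using rates' by (intro sum_pull_prob_bounds vp) auto
  have deficit: "eventually (\<lambda>n. real n - W' n \<le> 1 / (tau \<delta> m * (x - \<theta> 1)) * real (n + m) powr \<alpha>) sequentially"
    if "0 < \<alpha>" "\<alpha> < 1" for \<alpha>
    using alternative_pull_deficit[OF k x that] unfolding W'_def \<theta>'_def .
  have ln_growth: "eventually (\<lambda>n. \<beta> * ln (real n) \<le> ln (1 / (1 - W' n / (real n + 1)))) sequentially"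
    if "\<beta> < 1" for \<beta>
    using tau_pos x by (intro eventually_ln_le_ln_inverse_complement[OF _ m W'_le deficit that]) auto
  have "eventually (\<lambda>n. c * ln (real n) \<le> W n) sequentially"
  proof (rule eventually_ln_le_of_kl_bound[of d c "\<lambda>n. ln (1 / (1 - W' n / (real n + 1)))"
        "\<lambda>n. W n / (real n + 1)"])
    show "(\<lambda>n. W n / (real n + 1)) \<longlonglongrightarrow> 0"
      unfolding W_def by (rule pull_frequency_tendsto_0[OF k])
  qed (use d_pos c cx kl_bound ln_growth in \<open>simp_all add: d_def\<close>)
  then show ?thesis
    unfolding W_def .
qed

definition lower_bound_constant :: real where
  "lower_bound_constant =
     (\<Sum>k\<in>{2..K}. tau \<delta> m * (\<theta> 1 - \<theta> k) / kl_bern (tau \<delta> m * \<theta> k) (tau \<delta> m * \<theta> 1))"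

lemma kl_bern_scaled_pos:
  assumes "k \<in> {2..K}"
  shows "0 < kl_bern (tau \<delta> m * \<theta> k) (tau \<delta> m * \<theta> 1)"
proof -
  have "0 < \<theta> k" "\<theta> k < \<theta> 1" using assms rates best by auto
  then show ?thesis
    using scaled_rate_bounds[of "\<theta> k"] scaled_rate_bounds[OF rate_1_bounds] tau_pos rate_1_bounds
    by (intro kl_bern_pos) auto
qed

lemma lower_bound_constant_nonneg: "0 \<le> lower_bound_constant"
  unfolding lower_bound_constant_def using kl_bern_scaled_pos tau_pos best
  by (intro sum_nonneg divide_nonneg_pos mult_nonneg_nonneg) (auto simp: less_imp_le)

lemma eventually_regret_ge:
  assumes c: "0 \<le> c" "c < 1"
  shows "eventually (\<lambda>n. c * lower_bound_constant * ln (real n) \<le> regret K m \<pi> \<theta> \<delta> (n + m)) sequentially"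
proof -
  let ?d = "\<lambda>k. kl_bern (tau \<delta> m * \<theta> k) (tau \<delta> m * \<theta> 1)"
  have "eventually (\<lambda>n. \<forall>k\<in>{2..K}. c / ?d k * ln (real n) \<le> (\<Sum>s<n. pull_prob K m \<pi> \<theta> \<delta> k s)) sequentially"
    using kl_bern_scaled_pos c
    by (intro eventually_ball_finite ballI eventually_pulls_ge) (auto intro: divide_nonneg_pos)
  then show ?thesis
  proof (rule eventually_mono)
    fix n assume pulls: "\<forall>k\<in>{2..K}. c / ?d k * ln (real n) \<le> (\<Sum>s<n. pull_prob K m \<pi> \<theta> \<delta> k s)"
    have "c * lower_bound_constant * ln (real n)
        = tau \<delta> m * (\<Sum>k\<in>{2..K}. (\<theta> 1 - \<theta> k) * (c / ?d k * ln (real n)))"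
      unfolding lower_bound_constant_def by (simp add: sum_distrib_left sum_distrib_right algebra_simps)
    also have "\<dots> \<le> tau \<delta> m * (\<Sum>k\<in>{2..K}. (\<theta> 1 - \<theta> k) * (\<Sum>s<n. pull_prob K m \<pi> \<theta> \<delta> k s))"
      using pulls best tau_pos by (intro mult_left_mono sum_mono) (auto simp: less_imp_le)
    also have "\<dots> \<le> regret K m \<pi> \<theta> \<delta> (n + m)"
      by (rule regret_ge_weighted_pulls)
    finally show "c * lower_bound_constant * ln (real n) \<le> regret K m \<pi> \<theta> \<delta> (n + m)" .
  qed
qed

lemma eventually_regret_ratio_gt:
  assumes r: "r < lower_bound_constant"
  shows "eventually (\<lambda>T. r < regret K m \<pi> \<theta> \<delta> T / ln (real T)) sequentially"
proof -
  have "((\<lambda>c. c * c * lower_bound_constant) \<longlongrightarrow> 1 * 1 * lower_bound_constant) (at_left 1)"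
    by (intro tendsto_intros)
  then have "eventually (\<lambda>c. r < c * c * lower_bound_constant) (at_left (1::real))"
    using r by (simp add: order_tendstoD(1))
  moreover have "eventually (\<lambda>c. 0 < c \<and> c < 1) (at_left (1::real))"
    unfolding eventually_at_left_field by (intro exI[of _ 0]) auto
  text \<open>One factor \<open>c\<close> is lost in the per-arm bounds, the other in \<open>ln (T - m) \<ge> c ln T\<close>.\<close>
  ultimately obtain c where c: "r < c * c * lower_bound_constant" "0 < c" "c < 1"
    using eventually_happens'[OF trivial_limit_at_left_real eventually_conj] by blast
  have "eventually (\<lambda>n. c * lower_bound_constant * ln (real n) \<le> regret K m \<pi> \<theta> \<delta> (n + m)) sequentially"
    using c by (intro eventually_regret_ge) auto
  then have "eventually (\<lambda>T. c * lower_bound_constant * ln (real (T - m)) \<le> regret K m \<pi> \<theta> \<delta> (T - m + m)) sequentially"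
    by (rule eventually_compose_filterlim[OF _ filterlim_minus_const_nat_at_top])
  then have "eventually (\<lambda>T. c * lower_bound_constant * ln (real (T - m)) \<le> regret K m \<pi> \<theta> \<delta> T) sequentially"
    using eventually_ge_at_top[of m] by eventually_elim simp
  then show ?thesis
    using eventually_mult_ln_le_ln_diff[OF c(3), of m] eventually_le_ln_nat[of 1]
  proof eventually_elim
    case (elim T)
    then have "0 < ln (real T)" by simp
    then have "r * ln (real T) < c * (c * lower_bound_constant * ln (real T))"
      using c by (simp add: mult.assoc)
    also have "\<dots> \<le> c * lower_bound_constant * ln (real (T - m))"
      using elim c lower_bound_constant_nonneg by (simp add: mult_left_mono mult.left_commute[of c])
    also have "\<dots> \<le> regret K m \<pi> \<theta> \<delta> T" using elim by simp
    finally show ?case using \<open>0 < ln (real T)\<close> by (simp add: pos_less_divide_eq)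
  qed
qed

end

theorem theorem3:
  fixes K m :: nat and \<delta> :: "nat pmf" and \<theta> :: "nat \<Rightarrow> real" and \<pi> :: policy
  assumes "m \<ge> 1" and "K \<ge> 1"
    and "\<forall>k\<in>{1..K}. 0 < \<theta> k \<and> \<theta> k < 1"
    and "\<forall>k\<in>{2..K}. \<theta> k < \<theta> 1"
    and "tau \<delta> m > 0"
    and "valid_policy K \<pi>"
    and "uniformly_efficient K m \<delta> \<pi>"
  shows "Liminf sequentially (\<lambda>T. ereal (regret K m \<pi> \<theta> \<delta> T / ln (real T)))
           \<ge> ereal (\<Sum>k\<in>{2..K}. tau \<delta> m * (\<theta> 1 - \<theta> k)
                                 / kl_bern (tau \<delta> m * \<theta> k) (tau \<delta> m * \<theta> 1))"
proof -
  interpret censored_bandit K m \<delta> \<theta> \<pi>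
    using assms by unfold_locales
  show ?thesis
    using Liminf_ge_of_eventually_gt[OF eventually_regret_ratio_gt]
    unfolding lower_bound_constant_def .
qed

end
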